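(* Let $\mathbb K$ be a computable zero-sum free commutative semiring (with $0\neq1$). Given a weighted nested word automaton $\mathcal A$ over $\mathbb K$, it is decidable whether $\|\mathcal A\|(nw)=0$ for all $nw\in\mathrm{NW}(\Delta)$.
   Context: Nested words: $\Delta$ finite alphabet. A nesting relation of width $n$ is a relation $\nu$ on $[n]$ with: $\nu(i,j)\Rightarrow i<j$; $\nu(i,j),\nu(i,j')\Rightarrow j=j'$ and $\nu(i,j),\nu(i',j)\Rightarrow i=i'$; $\nu(i,j),\nu(i',j'),i<i'\Rightarrow j<i'$ or $j'<j$. A nested word is $(w,\nu)$, $w=a_1\cdots a_n\in\Delta^+$, $\nu$ of width $n$; $\mathrm{NW}(\Delta)$ is their set. If $\nu(i,j)$, $i$ is a call and $j$ a return position; others are internal. WNWA over $\mathbb K$: $\mathcal A=(Q,\iota,\delta_{call},\delta_{int},\delta_{ret},\kappa)$, $Q$ finite, $\delta_{call},\delta_{int}:Q\times\Delta\times Q\to K$, $\delta_{ret}:Q\times Q\times\Delta\times Q\to K$, $\iota,\kappa:Q\to K$. A run on $(a_1\cdots a_n,\nu)$ is $(q_0,\dots,q_n)$; weight at $j$: $\delta_{call}(q_{j-1},a_j,q_j)$ for a call $j$, $\delta_{int}(q_{j-1},a_j,q_j)$ for internal $j$, $\delta_{ret}(q_{j-1},q_{i-1},a_j,q_j)$ if $\nu(i,j)$; run weight is the product. $\|\mathcal A\|(nw)=\sum_{(q_0..q_n)}\iota(q_0)\mathrm{wt}\,\kappa(q_n)$; series of this form are regular. $\mathbb K$ is zero-sum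 free if $a+b=0$ implies $a=b=0$; computable means elements are finitely representable and operations and equality are computable. *)

theory Defs
  imports Main "HOL-Library.Nat_Bijection"
begin

datatype recf = Z | S | Id nat | Cn recf "recf list" | Pr recf recf | Mn recf

inductive eval :: "recf \<Rightarrow> nat list \<Rightarrow> nat \<Rightarrow> bool" where
  eval_Z: "eval Z xs 0"
| eval_S: "eval S (x # xs) (Suc x)"
| eval_Id: "i < length xs \<Longrightarrow> eval (Id i) xs (xs ! i)"
| eval_Cn: "length ys = length gs \<Longrightarrow> (\<forall>k < length gs. eval (gs ! k) xs (ys ! k))
            \<Longrightarrow> eval f ys y \<Longrightarrow> eval (Cn f gs) xs y"
| eval_Pr0: "eval f xs y \<Longrightarrow> eval (Pr f g) (0 # xs) y"
| eval_PrS: "eval (Pr f g) (n # xs) y \<Longrightarrow> eval g (y # n # xs) z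
            \<Longrightarrow> eval (Pr f g) (Suc n # xs) z"
| eval_Mn: "eval f (y # xs) 0 \<Longrightarrow> (\<forall>k < y. \<exists>v. eval f (k # xs) v \<and> 0 < v)
            \<Longrightarrow> eval (Mn f) xs y"

text \<open>K is computable w.r.t. an injective coding enc of its elements by natural
  numbers (finite representability; equality of elements then reduces to equality
  of codes) if addition and multiplication are computed by recursive programs.\<close>

definition computable_semiring :: "('k::comm_semiring_1 \<Rightarrow> nat) \<Rightarrow> bool" where
  "computable_semiring enc \<longleftrightarrow> inj enc \<and>
     (\<exists>p. \<forall>a b. eval p [enc a, enc b] (enc (a + b))) \<and>
     (\<exists>p. \<forall>a b. eval p [enc a, enc b] (enc (a * b)))"

definition zero_sum_free :: "'k::comm_semiring_1 itself \<Rightarrow> bool" where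
  "zero_sum_free _ \<longleftrightarrow> (\<forall>a b :: 'k. a + b = 0 \<longrightarrow> a = 0 \<and> b = 0)"

definition nesting :: "nat \<Rightarrow> (nat \<times> nat) set \<Rightarrow> bool" where
  "nesting n \<nu> \<longleftrightarrow> \<nu> \<subseteq> {1..n} \<times> {1..n}
     \<and> (\<forall>i j. (i, j) \<in> \<nu> \<longrightarrow> i < j)
     \<and> (\<forall>i j j'. (i, j) \<in> \<nu> \<longrightarrow> (i, j') \<in> \<nu> \<longrightarrow> j = j')
     \<and> (\<forall>i i' j. (i, j) \<in> \<nu> \<longrightarrow> (i', j) \<in> \<nu> \<longrightarrow> i = i')
     \<and> (\<forall>i j i' j'. (i, j) \<in> \<nu> \<longrightarrow> (i', j') \<in> \<nu> \<longrightarrow> i < i' \<longrightarrow> j < i' \<or> j' < j)"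

definition NW :: "nat \<Rightarrow> (nat list \<times> (nat \<times> nat) set) set" where
  "NW m = {(w, \<nu>). w \<noteq> [] \<and> set w \<subseteq> {..<m} \<and> nesting (length w) \<nu>}"

record 'k wnwa =
  nst :: nat
  iota :: "nat \<Rightarrow> 'k"
  dcall :: "nat \<Rightarrow> nat \<Rightarrow> nat \<Rightarrow> 'k"
  dint :: "nat \<Rightarrow> nat \<Rightarrow> nat \<Rightarrow> 'k"
  dret :: "nat \<Rightarrow> nat \<Rightarrow> nat \<Rightarrow> nat \<Rightarrow> 'k"
  kappa :: "nat \<Rightarrow> 'k"

text \<open>Weight of position j (1-based) of run qs = (q_0,...,q_n) on (w, nu).\<close>
definition pos_weight ::
  "'k wnwa \<Rightarrow> nat list \<Rightarrow> (nat \<times> nat) set \<Rightarrow> nat list \<Rightarrow> nat \<Rightarrow> 'k" where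
  "pos_weight A w \<nu> qs j =
     (if \<exists>k. (j, k) \<in> \<nu> then dcall A (qs ! (j - 1)) (w ! (j - 1)) (qs ! j)
      else if \<exists>i. (i, j) \<in> \<nu> then
        dret A (qs ! (j - 1)) (qs ! ((THE i. (i, j) \<in> \<nu>) - 1)) (w ! (j - 1)) (qs ! j)
      else dint A (qs ! (j - 1)) (w ! (j - 1)) (qs ! j))"

definition runs :: "'k wnwa \<Rightarrow> nat \<Rightarrow> nat list set" where
  "runs A n = {qs. length qs = Suc n \<and> set qs \<subseteq> {..<nst A}}"

definition behaviour :: "'k::comm_semiring_1 wnwa \<Rightarrow> nat list \<times> (nat \<times> nat) set \<Rightarrow> 'k" where
  "behaviour A nw = (case nw of (w, \<nu>) \<Rightarrow>
     (\<Sum>qs \<in> runs A (length w).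
        iota A (qs ! 0) * (\<Prod>j \<in> {1..length w}. pos_weight A w \<nu> qs j)
        * kappa A (qs ! length w)))"

definition code_wnwa :: "nat \<Rightarrow> ('k \<Rightarrow> nat) \<Rightarrow> 'k wnwa \<Rightarrow> nat" where
  "code_wnwa m enc A = (let n = nst A in list_encode (
      [n]
    @ [enc (iota A p). p \<leftarrow> [0..<n]]
    @ [enc (dcall A p a q). p \<leftarrow> [0..<n], a \<leftarrow> [0..<m], q \<leftarrow> [0..<n]]
    @ [enc (dint A p a q). p \<leftarrow> [0..<n], a \<leftarrow> [0..<m], q \<leftarrow> [0..<n]]
    @ [enc (dret A p p' a q). p \<leftarrow> [0..<n], p' \<leftarrow> [0..<n], a \<leftarrow> [0..<m], q \<leftarrow> [0..<n]]
    @ [enc (kappa A p). p \<leftarrow> [0..<n]]))"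

end

theory Submission
  imports Defs
begin

text \<open>By zero-sum freeness, \<open>\<parallel>\<A>\<parallel>(nw) \<noteq> 0\<close> iff some run on \<open>nw\<close> has nonzero weight.
  Such a run can be shortened: record at each position the current state and, for each
  pending call, the state before the call and the state after its return. If two positions of
  a shortest such nested word carried the same record, or two calls on one stack the same
  pair of states, cutting out the segments in between would leave a nested word with a run
  whose weight is a factor of the original weight, hence nonzero. So for \<open>n\<close> states a
  witness of length at most \<open>n (n\<^sup>2 + 1) (n\<^sup>2)\<^bsup>n\<^sup>2\<^esup>\<close> exists if any does, and a
  \<open>\<mu>\<close>-recursive program can search all candidates up to that length, multiplying weights
  with the program for the multiplication of the semiring.\<close>

section \<open>Recursive computability\<close>

text \<open>The domain predicate \<open>D\<close> is essential: the semiring operations are only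
  computed on codes of semiring elements, so the programs built from them are correct
  only on arguments satisfying such an invariant.\<close>

definition rec_computable :: "nat \<Rightarrow> (nat list \<Rightarrow> bool) \<Rightarrow> (nat list \<Rightarrow> nat) \<Rightarrow> bool" where
  "rec_computable k D f \<longleftrightarrow> (\<exists>p. \<forall>xs. length xs = k \<longrightarrow> D xs \<longrightarrow> eval p xs (f xs))"

named_theorems rec_computable_intros

lemma rec_computable_cong:
  "rec_computable k D f \<Longrightarrow> (\<And>xs. length xs = k \<Longrightarrow> D xs \<Longrightarrow> f xs = g xs) \<Longrightarrow> rec_computable k D g"
  unfolding rec_computable_def by metis

lemma rec_computable_mono:
  "rec_computable k D f \<Longrightarrow> (\<And>xs. length xs = k \<Longrightarrow> D' xs \<Longrightarrow> D xs) \<Longrightarrow> rec_computable k D' f"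
  unfolding rec_computable_def by metis

lemma rec_computable_zero: "rec_computable k D (\<lambda>_. 0)"
  unfolding rec_computable_def by (auto intro: eval_Z)

lemma rec_computable_proj [rec_computable_intros]: "i < k \<Longrightarrow> rec_computable k D (\<lambda>xs. xs ! i)"
  unfolding rec_computable_def by (rule exI[of _ "Id i"]) (auto intro: eval_Id)

lemma rec_computable_compose:
  assumes F: "rec_computable j E F" and len: "length gs = j"
    and gs: "\<forall>g\<in>set gs. rec_computable k D g"
    and dom: "\<And>xs. length xs = k \<Longrightarrow> D xs \<Longrightarrow> E (map (\<lambda>g. g xs) gs)"
  shows "rec_computable k D (\<lambda>xs. F (map (\<lambda>g. g xs) gs))"
proof -
  from gs obtain P where P: "\<forall>g\<in>set gs. \<forall>xs. length xs = k \<longrightarrow> D xs \<longrightarrow> eval (P g) xs (g xs)"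
    unfolding rec_computable_def by metis
  from F obtain pF where pF: "\<forall>ys. length ys = j \<longrightarrow> E ys \<longrightarrow> eval pF ys (F ys)"
    unfolding rec_computable_def by blast
  have "eval (Cn pF (map P gs)) xs (F (map (\<lambda>g. g xs) gs))" if "length xs = k" "D xs" for xs
    by (rule eval_Cn[where ys="map (\<lambda>g. g xs) gs"]) (use P pF dom[OF that] len that in auto)
  then show ?thesis
    unfolding rec_computable_def by blast
qed

lemma rec_computable_compose1:
  assumes "rec_computable 1 (\<lambda>_. True) (\<lambda>ys. F (ys ! 0))" and "rec_computable k D f"
  shows "rec_computable k D (\<lambda>xs. F (f xs))"
  using rec_computable_compose[OF assms(1), of "[f]"] assms(2) by simp

lemma rec_computable_compose2:
  assumes "rec_computable 2 (\<lambda>_. True) (\<lambda>ys. F (ys ! 0) (ys ! 1))"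
    and "rec_computable k D f" and "rec_computable k D g"
  shows "rec_computable k D (\<lambda>xs. F (f xs) (g xs))"
  using rec_computable_compose[OF assms(1), of "[f, g]"] assms(2,3) by simp

lemma rec_computable_Suc [rec_computable_intros]:
  assumes "rec_computable k D f"
  shows "rec_computable k D (\<lambda>xs. Suc (f xs))"
proof (rule rec_computable_compose1[where F=Suc, OF _ assms])
  show "rec_computable 1 (\<lambda>_. True) (\<lambda>ys. Suc (ys ! 0))"
    unfolding rec_computable_def by (rule exI[of _ S]) (auto simp: length_Suc_conv intro: eval_S)
qed

lemma rec_computable_const [rec_computable_intros]: "rec_computable k D (\<lambda>_. c)"
  by (induction c) (auto intro: rec_computable_zero rec_computable_Suc)

text \<open>Primitive recursion on the first argument, the step function receiving the
  previous value, the recursion variable and the parameters, in this order.\<close>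

primrec prim_rec :: "(nat list \<Rightarrow> nat) \<Rightarrow> (nat list \<Rightarrow> nat) \<Rightarrow> nat \<Rightarrow> nat list \<Rightarrow> nat" where
  "prim_rec b g 0 xs = b xs"
| "prim_rec b g (Suc n) xs = g (prim_rec b g n xs # n # xs)"

lemma rec_computable_prim_rec_hd:
  assumes b: "rec_computable k D b" and g: "rec_computable (Suc (Suc k)) E g"
    and inv: "\<And>n xs. length xs = k \<Longrightarrow> D xs \<Longrightarrow> E (prim_rec b g n xs # n # xs)"
  shows "rec_computable (Suc k) (\<lambda>ys. D (tl ys)) (\<lambda>ys. prim_rec b g (hd ys) (tl ys))"
proof -
  from b obtain pb where pb: "\<forall>xs. length xs = k \<longrightarrow> D xs \<longrightarrow> eval pb xs (b xs)"
    unfolding rec_computable_def by blast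
  from g obtain pg where pg: "\<forall>xs. length xs = Suc (Suc k) \<longrightarrow> E xs \<longrightarrow> eval pg xs (g xs)"
    unfolding rec_computable_def by blast
  have Pr: "eval (Pr pb pg) (n # xs) (prim_rec b g n xs)" if "length xs = k" "D xs" for n xs
  proof (induction n)
    case 0
    show ?case using pb that by (auto intro: eval_Pr0)
  next
    case (Suc n)
    show ?case using Suc.IH pg inv[OF that] that by (auto intro: eval_PrS)
  qed
  show ?thesis
    unfolding rec_computable_def using Pr by (intro exI[of _ "Pr pb pg"]) (auto simp: length_Suc_conv)
qed

lemma rec_computable_prim_rec:
  assumes b: "rec_computable k D b" and g: "rec_computable (Suc (Suc k)) E g"
    and inv: "\<And>n xs. length xs = k \<Longrightarrow> D xs \<Longrightarrow> E (prim_rec b g n xs # n # xs)"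
    and a: "rec_computable k D a"
  shows "rec_computable k D (\<lambda>xs. prim_rec b g (a xs) xs)"
proof -
  have args: "map (\<lambda>i. xs ! i) [0..<k] = xs" if "length xs = k" for xs
    using that by (intro nth_equalityI) auto
  have "rec_computable k D (\<lambda>xs. (\<lambda>ys. prim_rec b g (hd ys) (tl ys))
          (map (\<lambda>h. h xs) (a # map (\<lambda>i xs. xs ! i) [0..<k])))"
    by (rule rec_computable_compose[OF rec_computable_prim_rec_hd[OF b g inv]])
       (auto simp: a rec_computable_proj args comp_def)
  then show ?thesis
    by (rule rec_computable_cong) (simp add: args comp_def)
qed

lemma rec_computable_drop2:
  assumes "rec_computable k D g"
  shows "rec_computable (Suc (Suc k)) (\<lambda>ys. D (drop 2 ys)) (\<lambda>ys. g (drop 2 ys))"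
proof -
  have args: "map (\<lambda>i. ys ! Suc (Suc i)) [0..<k] = drop 2 ys" if "length ys = Suc (Suc k)" for ys
    using that by (intro nth_equalityI) auto
  have "rec_computable (Suc (Suc k)) (\<lambda>ys. D (drop 2 ys))
          (\<lambda>ys. g (map (\<lambda>h. h ys) (map (\<lambda>i ys. ys ! (i + 2)) [0..<k])))"
    by (rule rec_computable_compose[OF assms]) (auto simp: rec_computable_proj args comp_def)
  then show ?thesis
    by (rule rec_computable_cong) (simp add: args comp_def)
qed

lemma rec_computable_drop1:
  assumes "rec_computable (Suc k) (\<lambda>ys. D (tl ys)) G"
  shows "rec_computable (Suc (Suc k)) (\<lambda>ys. D (drop 2 ys)) (\<lambda>ys. G (ys ! 1 # drop 2 ys))"
proof -
  have args: "map (\<lambda>i. ys ! Suc (Suc i)) [0..<k] = drop 2 ys" if "length ys = Suc (Suc k)" for ys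
    using that by (intro nth_equalityI) auto
  have "rec_computable (Suc (Suc k)) (\<lambda>ys. D (drop 2 ys))
     (\<lambda>ys. G (map (\<lambda>h. h ys) ((\<lambda>ys. ys ! 1) # map (\<lambda>i ys. ys ! (i + 2)) [0..<k])))"
    by (rule rec_computable_compose[OF assms]) (auto simp: rec_computable_proj args comp_def)
  then show ?thesis
    by (rule rec_computable_cong) (simp add: args comp_def)
qed

lemma prim_rec_add: "prim_rec g (\<lambda>ys. Suc (ys ! 0)) n xs = g xs + n"
  by (induction n) auto

lemma rec_computable_add [rec_computable_intros]:
  assumes "rec_computable k D f" "rec_computable k D g"
  shows "rec_computable k D (\<lambda>xs. f xs + g xs)"
proof -
  have "rec_computable k D (\<lambda>xs. prim_rec g (\<lambda>ys. Suc (ys ! 0)) (f xs) xs)"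
    by (rule rec_computable_prim_rec[OF assms(2) _ _ assms(1), where E="\<lambda>_. True"])
       (auto intro: rec_computable_Suc rec_computable_proj)
  then show ?thesis
    by (rule rec_computable_cong) (simp add: prim_rec_add)
qed

lemma prim_rec_mult: "prim_rec (\<lambda>_. 0) (\<lambda>ys. ys ! 0 + g (drop 2 ys)) n xs = n * g xs"
  by (induction n) auto

lemma rec_computable_mult [rec_computable_intros]:
  assumes "rec_computable k D f" "rec_computable k D g"
  shows "rec_computable k D (\<lambda>xs. f xs * g xs)"
proof -
  have "rec_computable k D (\<lambda>xs. prim_rec (\<lambda>_. 0) (\<lambda>ys. ys ! 0 + g (drop 2 ys)) (f xs) xs)"
    by (rule rec_computable_prim_rec[OF rec_computable_zero _ _ assms(1), where E="\<lambda>ys. D (drop 2 ys)"])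
       (auto intro!: rec_computable_add rec_computable_proj rec_computable_drop2[OF assms(2)])
  then show ?thesis
    by (rule rec_computable_cong) (simp add: prim_rec_mult)
qed

lemma prim_rec_pred: "prim_rec (\<lambda>_. 0) (\<lambda>ys. ys ! 1) n xs = n - 1"
  by (induction n) auto

lemma prim_rec_diff: "prim_rec f (\<lambda>ys. ys ! 0 - 1) n xs = f xs - n"
  by (induction n) auto

lemma rec_computable_diff [rec_computable_intros]:
  assumes "rec_computable k D f" "rec_computable k D g"
  shows "rec_computable k D (\<lambda>xs. f xs - g xs)"
proof -
  have "rec_computable (Suc (Suc k)) (\<lambda>_. True) (\<lambda>ys. prim_rec (\<lambda>_. 0) (\<lambda>ys. ys ! 1) (ys ! 0) ys)"
    by (rule rec_computable_prim_rec[where E="\<lambda>_. True"])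
       (auto intro: rec_computable_zero rec_computable_proj)
  then have "rec_computable (Suc (Suc k)) (\<lambda>_. True) (\<lambda>ys. ys ! 0 - 1)"
    by (rule rec_computable_cong) (metis prim_rec_pred)
  then have "rec_computable k D (\<lambda>xs. prim_rec f (\<lambda>ys. ys ! 0 - 1) (g xs) xs)"
    by (rule rec_computable_prim_rec[OF assms(1) _ _ assms(2)]) simp
  then show ?thesis
    by (rule rec_computable_cong) (simp add: prim_rec_diff[simplified])
qed

lemma rec_computable_less [rec_computable_intros]:
  "rec_computable k D f \<Longrightarrow> rec_computable k D g \<Longrightarrow> rec_computable k D (\<lambda>xs. of_bool (f xs < g xs))"
  by (rule rec_computable_cong[where f="\<lambda>xs. 1 - (1 - (g xs - f xs))"],
      (intro rec_computable_diff rec_computable_const; assumption)) auto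

lemma rec_computable_le [rec_computable_intros]:
  "rec_computable k D f \<Longrightarrow> rec_computable k D g \<Longrightarrow> rec_computable k D (\<lambda>xs. of_bool (f xs \<le> g xs))"
  by (rule rec_computable_cong[where f="\<lambda>xs. 1 - (f xs - g xs)"],
      (intro rec_computable_diff rec_computable_const; assumption)) auto

lemma rec_computable_eq [rec_computable_intros]:
  "rec_computable k D f \<Longrightarrow> rec_computable k D g \<Longrightarrow> rec_computable k D (\<lambda>xs. of_bool (f xs = g xs))"
  by (rule rec_computable_cong[where f="\<lambda>xs. 1 - ((f xs - g xs) + (g xs - f xs))"],
      (intro rec_computable_diff rec_computable_add rec_computable_const; assumption)) auto

lemma rec_computable_not [rec_computable_intros]:
  "rec_computable k D (\<lambda>xs. of_bool (P xs)) \<Longrightarrow> rec_computable k D (\<lambda>xs. of_bool (\<not> P xs))"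
  by (rule rec_computable_cong[where f="\<lambda>xs. 1 - of_bool (P xs)"],
      (intro rec_computable_diff rec_computable_const; assumption)) auto

lemma rec_computable_conj [rec_computable_intros]:
  "rec_computable k D (\<lambda>xs. of_bool (P xs)) \<Longrightarrow> rec_computable k D (\<lambda>xs. of_bool (Q xs)) \<Longrightarrow>
   rec_computable k D (\<lambda>xs. of_bool (P xs \<and> Q xs))"
  by (rule rec_computable_cong[where f="\<lambda>xs. of_bool (P xs) * of_bool (Q xs)"],
      (intro rec_computable_mult; assumption)) auto

lemma rec_computable_disj [rec_computable_intros]:
  "rec_computable k D (\<lambda>xs. of_bool (P xs)) \<Longrightarrow> rec_computable k D (\<lambda>xs. of_bool (Q xs)) \<Longrightarrow>
   rec_computable k D (\<lambda>xs. of_bool (P xs \<or> Q xs))"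
  by (rule rec_computable_cong[where f="\<lambda>xs. of_bool (\<not> (\<not> P xs \<and> \<not> Q xs))"],
      (intro rec_computable_not rec_computable_conj; assumption)) auto

lemma rec_computable_imp [rec_computable_intros]:
  "rec_computable k D (\<lambda>xs. of_bool (P xs)) \<Longrightarrow> rec_computable k D (\<lambda>xs. of_bool (Q xs)) \<Longrightarrow>
   rec_computable k D (\<lambda>xs. of_bool (P xs \<longrightarrow> Q xs))"
  by (rule rec_computable_cong[where f="\<lambda>xs. of_bool (\<not> P xs \<or> Q xs)"],
      (intro rec_computable_not rec_computable_disj; assumption)) auto

lemma rec_computable_if [rec_computable_intros]:
  "rec_computable k D (\<lambda>xs. of_bool (P xs)) \<Longrightarrow> rec_computable k D f \<Longrightarrow> rec_computable k D g \<Longrightarrow>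
   rec_computable k D (\<lambda>xs. if P xs then f xs else g xs)"
  by (rule rec_computable_cong[where f="\<lambda>xs. of_bool (P xs) * f xs + (1 - of_bool (P xs)) * g xs"],
      (intro rec_computable_add rec_computable_mult rec_computable_diff rec_computable_const; assumption)) auto

lemma prim_rec_sum:
  "prim_rec (\<lambda>_. 0) (\<lambda>ys. ys ! 0 + G (ys ! 1 # drop 2 ys)) n xs = (\<Sum>i<n. G (i # xs))"
  by (induction n) auto

text \<open>In bounded sums and quantifiers the bound variable is the first argument of \<open>G\<close>.\<close>

lemma rec_computable_sum:
  assumes G: "rec_computable (Suc k) (\<lambda>ys. D (tl ys)) G" and b: "rec_computable k D b"
    and eq: "\<And>i xs. length xs = k \<Longrightarrow> D xs \<Longrightarrow> G (i # xs) = h i xs"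
  shows "rec_computable k D (\<lambda>xs. \<Sum>i<b xs. h i xs)"
proof -
  have "rec_computable k D (\<lambda>xs. prim_rec (\<lambda>_. 0) (\<lambda>ys. ys ! 0 + G (ys ! 1 # drop 2 ys)) (b xs) xs)"
    by (rule rec_computable_prim_rec[OF rec_computable_zero _ _ b, where E="\<lambda>ys. D (drop 2 ys)"])
       (auto intro!: rec_computable_add rec_computable_proj rec_computable_drop1[OF G, simplified])
  then show ?thesis
    by (rule rec_computable_cong) (simp add: prim_rec_sum[simplified] eq)
qed

lemma rec_computable_all:
  assumes G: "rec_computable (Suc k) (\<lambda>ys. D (tl ys)) G" and b: "rec_computable k D b"
    and eq: "\<And>i xs. length xs = k \<Longrightarrow> D xs \<Longrightarrow> G (i # xs) = of_bool (P i xs)"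
  shows "rec_computable k D (\<lambda>xs. of_bool (\<forall>i<b xs. P i xs))"
proof -
  have G': "rec_computable (Suc k) (\<lambda>ys. D (tl ys)) (\<lambda>ys. 1 - G ys)"
    by (intro rec_computable_diff rec_computable_const G)
  have "rec_computable k D (\<lambda>xs. of_bool ((\<Sum>i<b xs. 1 - of_bool (P i xs)) = (0::nat)))"
    by (rule rec_computable_eq[OF rec_computable_sum[OF G' b] rec_computable_const]) (simp add: eq)
  then show ?thesis
    by (rule rec_computable_cong) auto
qed

lemma rec_computable_ex:
  assumes G: "rec_computable (Suc k) (\<lambda>ys. D (tl ys)) G" and b: "rec_computable k D b"
    and eq: "\<And>i xs. length xs = k \<Longrightarrow> D xs \<Longrightarrow> G (i # xs) = of_bool (P i xs)"
  shows "rec_computable k D (\<lambda>xs. of_bool (\<exists>i<b xs. P i xs))"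
proof -
  have G': "rec_computable (Suc k) (\<lambda>ys. D (tl ys)) (\<lambda>ys. 1 - G ys)"
    by (intro rec_computable_diff rec_computable_const G)
  have "rec_computable k D (\<lambda>xs. of_bool (\<not> (\<forall>i<b xs. \<not> P i xs)))"
    by (rule rec_computable_not[OF rec_computable_all[OF G' b]]) (simp add: eq)
  then show ?thesis
    by (rule rec_computable_cong) auto
qed

lemma prim_rec_power: "prim_rec (\<lambda>_. 1) (\<lambda>zs. zs ! 0 * zs ! 2) n xs = (xs ! 0) ^ n"
  by (induction n) auto

lemma rec_computable_power [rec_computable_intros]:
  "rec_computable k D f \<Longrightarrow> rec_computable k D g \<Longrightarrow> rec_computable k D (\<lambda>xs. f xs ^ g xs)"
proof (rule rec_computable_compose2[where F="(^)"])
  have "rec_computable 2 (\<lambda>_. True) (\<lambda>xs. prim_rec (\<lambda>_. 1) (\<lambda>zs. zs ! 0 * zs ! 2) (xs ! 1) xs)"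
    by (rule rec_computable_prim_rec[where E="\<lambda>_. True"]) (auto intro!: rec_computable_intros)
  then show "rec_computable 2 (\<lambda>_. True) (\<lambda>ys. ys ! 0 ^ ys ! 1)"
    by (rule rec_computable_cong) (simp add: prim_rec_power[simplified])
qed

lemma prim_rec_triangle: "prim_rec (\<lambda>_. 0) (\<lambda>ys. ys ! 0 + Suc (ys ! 1)) n xs = triangle n"
  by (induction n) auto

lemma rec_computable_triangle [rec_computable_intros]:
  "rec_computable k D f \<Longrightarrow> rec_computable k D (\<lambda>xs. triangle (f xs))"
proof (rule rec_computable_compose1[where F=triangle])
  have "rec_computable 1 (\<lambda>_. True) (\<lambda>ys. prim_rec (\<lambda>_. 0) (\<lambda>ys. ys ! 0 + Suc (ys ! 1)) (ys ! 0) ys)"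
    by (rule rec_computable_prim_rec[where E="\<lambda>_. True"])
       (auto intro!: rec_computable_intros rec_computable_zero)
  then show "rec_computable 1 (\<lambda>_. True) (\<lambda>ys. triangle (ys ! 0))"
    by (rule rec_computable_cong) (simp add: prim_rec_triangle[simplified])
qed

section \<open>Lists of numbers coded by \<open>list_encode\<close>\<close>

text \<open>Since \<open>prod_encode (x, y) = triangle (x + y) + x\<close>, the diagonal \<open>x + y\<close> is
  recovered by a bounded search.\<close>

definition prod_diag :: "nat \<Rightarrow> nat" where
  "prod_diag n = (\<Sum>k<Suc n. of_bool (triangle (Suc k) \<le> n))"

definition prod_fst :: "nat \<Rightarrow> nat" where
  "prod_fst n = n - triangle (prod_diag n)"

definition prod_snd :: "nat \<Rightarrow> nat" where
  "prod_snd n = prod_diag n - prod_fst n"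

lemma triangle_mono: "a \<le> b \<Longrightarrow> triangle a \<le> triangle b"
  by (induction b) (auto simp: le_Suc_eq)

lemma sum_lessThan_of_bool_less: "(\<Sum>k<N. of_bool (k < s)) = min N (s::nat)"
  by (induction N) auto

lemma prod_diag_triangle_add:
  assumes "x \<le> s"
  shows "prod_diag (triangle s + x) = s"
proof -
  let ?n = "triangle s + x"
  have "triangle (Suc k) \<le> ?n \<longleftrightarrow> k < s" for k
  proof
    assume "triangle (Suc k) \<le> ?n"
    then show "k < s"
      using triangle_mono[of "Suc s" "Suc k"] assms by (cases "k < s") auto
  next
    assume "k < s"
    then show "triangle (Suc k) \<le> ?n"
      using triangle_mono[of "Suc k" s] by simp
  qed
  moreover have "s \<le> triangle s"
    by (induction s) auto
  ultimately show ?thesis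
    by (simp add: prod_diag_def sum_lessThan_of_bool_less del: triangle_Suc)
qed

lemma prod_decode_conv: "prod_decode n = (prod_fst n, prod_snd n)"
proof -
  obtain x y where xy: "prod_decode n = (x, y)"
    by (cases "prod_decode n")
  then have n: "n = triangle (x + y) + x"
    using prod_decode_inverse[of n] by (simp add: prod_encode_def)
  then have "prod_diag n = x + y"
    using prod_diag_triangle_add[of x "x + y"] by simp
  then show ?thesis
    using xy n by (simp add: prod_fst_def prod_snd_def)
qed

lemma rec_computable_prod_diag [rec_computable_intros]:
  "rec_computable k D f \<Longrightarrow> rec_computable k D (\<lambda>xs. prod_diag (f xs))"
proof (rule rec_computable_compose1[where F=prod_diag])
  have "rec_computable 1 (\<lambda>_. True) (\<lambda>xs. \<Sum>i<Suc (xs ! 0). of_bool (triangle (Suc i) \<le> xs ! 0))"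
    by (rule rec_computable_sum[where G="\<lambda>ys. of_bool (triangle (Suc (ys ! 0)) \<le> ys ! 1)"])
       (auto intro!: rec_computable_intros simp del: triangle_Suc)
  then show "rec_computable 1 (\<lambda>_. True) (\<lambda>ys. prod_diag (ys ! 0))"
    by (simp add: prod_diag_def)
qed

lemma rec_computable_prod_fst [rec_computable_intros]:
  "rec_computable k D f \<Longrightarrow> rec_computable k D (\<lambda>xs. prod_fst (f xs))"
  unfolding prod_fst_def by (intro rec_computable_intros)

lemma rec_computable_prod_snd [rec_computable_intros]:
  "rec_computable k D f \<Longrightarrow> rec_computable k D (\<lambda>xs. prod_snd (f xs))"
  unfolding prod_snd_def by (intro rec_computable_intros)

definition code_hd :: "nat \<Rightarrow> nat" where
  "code_hd c = prod_fst (c - 1)"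

definition code_tl :: "nat \<Rightarrow> nat" where
  "code_tl c = prod_snd (c - 1)"

lemma code_hd_Suc_prod_encode [simp]: "code_hd (Suc (prod_encode (x, y))) = x"
  using prod_decode_conv[of "prod_encode (x, y)"] by (simp add: code_hd_def)

lemma code_tl_Suc_prod_encode [simp]: "code_tl (Suc (prod_encode (x, y))) = y"
  using prod_decode_conv[of "prod_encode (x, y)"] by (simp add: code_tl_def)

lemma code_tl_0 [simp]: "code_tl 0 = 0"
  using prod_encode_inverse[of "(0, 0)"] prod_decode_conv[of 0]
  by (simp add: code_tl_def prod_encode_def)

lemma code_tl_list_encode: "code_tl (list_encode xs) = list_encode (tl xs)"
  by (cases xs) simp_all

lemma rec_computable_code_hd [rec_computable_intros]:
  "rec_computable k D f \<Longrightarrow> rec_computable k D (\<lambda>xs. code_hd (f xs))"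
  unfolding code_hd_def by (intro rec_computable_intros)

lemma rec_computable_code_tl [rec_computable_intros]:
  "rec_computable k D f \<Longrightarrow> rec_computable k D (\<lambda>xs. code_tl (f xs))"
  unfolding code_tl_def by (intro rec_computable_intros)

definition code_drop :: "nat \<Rightarrow> nat \<Rightarrow> nat" where
  "code_drop i = code_tl ^^ i"

lemma code_drop_list_encode: "code_drop i (list_encode xs) = list_encode (drop i xs)"
  by (induction i) (simp_all add: code_drop_def code_tl_list_encode drop_Suc tl_drop)

lemma prim_rec_code_drop: "prim_rec (\<lambda>xs. xs ! 1) (\<lambda>ys. code_tl (ys ! 0)) i xs = code_drop i (xs ! 1)"
  by (induction i) (simp_all add: code_drop_def)

lemma rec_computable_code_drop [rec_computable_intros]:
  "rec_computable k D f \<Longrightarrow> rec_computable k D g \<Longrightarrow> rec_computable k D (\<lambda>xs. code_drop (f xs) (g xs))"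
proof (rule rec_computable_compose2[where F=code_drop])
  have "rec_computable 2 (\<lambda>_. True) (\<lambda>xs. prim_rec (\<lambda>xs. xs ! 1) (\<lambda>ys. code_tl (ys ! 0)) (xs ! 0) xs)"
    by (rule rec_computable_prim_rec[where E="\<lambda>_. True"]) (auto intro!: rec_computable_intros)
  then show "rec_computable 2 (\<lambda>_. True) (\<lambda>ys. code_drop (ys ! 0) (ys ! 1))"
    by (rule rec_computable_cong) (simp add: prim_rec_code_drop[simplified])
qed

definition code_nth :: "nat \<Rightarrow> nat \<Rightarrow> nat" where
  "code_nth c i = code_hd (code_drop i c)"

definition code_length :: "nat \<Rightarrow> nat" where
  "code_length c = (\<Sum>i<c. of_bool (code_drop i c \<noteq> 0))"

lemma code_nth_list_encode: "i < length xs \<Longrightarrow> code_nth (list_encode xs) i = xs ! i"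
  by (simp add: code_nth_def code_drop_list_encode Cons_nth_drop_Suc[symmetric])

lemma length_le_list_encode: "length xs \<le> list_encode xs"
proof (induction xs)
  case (Cons x xs)
  then show ?case using le_prod_encode_2[of "list_encode xs" x] by simp
qed simp

lemma code_length_list_encode: "code_length (list_encode xs) = length xs"
proof -
  have "list_encode ys = 0 \<longleftrightarrow> ys = []" for ys
    by (cases ys) simp_all
  then have "code_drop i (list_encode xs) \<noteq> 0 \<longleftrightarrow> i < length xs" for i
    by (simp add: code_drop_list_encode not_le)
  then show ?thesis
    using length_le_list_encode[of xs]
    by (simp add: code_length_def sum_lessThan_of_bool_less min_absorb2)
qed

lemma rec_computable_code_nth [rec_computable_intros]:
  "rec_computable k D f \<Longrightarrow> rec_computable k D g \<Longrightarrow> rec_computable k D (\<lambda>xs. code_nth (f xs) (g xs))"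
  unfolding code_nth_def by (intro rec_computable_intros)

lemma rec_computable_code_length [rec_computable_intros]:
  "rec_computable k D f \<Longrightarrow> rec_computable k D (\<lambda>xs. code_length (f xs))"
proof (rule rec_computable_compose1[where F=code_length])
  have "rec_computable 1 (\<lambda>_. True) (\<lambda>xs. \<Sum>i<xs ! 0. of_bool (\<not> code_drop i (xs ! 0) = 0))"
    by (rule rec_computable_sum[where G="\<lambda>ys. of_bool (\<not> code_drop (ys ! 0) (ys ! 1) = 0)"])
       (auto intro!: rec_computable_intros)
  then show "rec_computable 1 (\<lambda>_. True) (\<lambda>ys. code_length (ys ! 0))"
    by (simp add: code_length_def)
qed

primrec list_code_bound :: "nat \<Rightarrow> nat \<Rightarrow> nat" where
  "list_code_bound 0 X = 0"
| "list_code_bound (Suc k) X = Suc (prod_encode (X, list_code_bound k X))"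

lemma prod_encode_mono: "a \<le> a' \<Longrightarrow> b \<le> b' \<Longrightarrow> prod_encode (a, b) \<le> prod_encode (a', b')"
  unfolding prod_encode_def using triangle_mono[of "a + b" "a' + b'"] by simp

lemma list_encode_le_list_code_bound:
  "length xs \<le> k \<Longrightarrow> (\<forall>x\<in>set xs. x \<le> X) \<Longrightarrow> list_encode xs \<le> list_code_bound k X"
proof (induction xs arbitrary: k)
  case (Cons x xs)
  then obtain k' where k: "k = Suc k'"
    by (cases k) auto
  have "list_encode xs \<le> list_code_bound k' X"
    using Cons k by auto
  then show ?case
    using Cons.prems k prod_encode_mono[of x X] by simp
qed simp

lemma prim_rec_list_code_bound:
  "prim_rec (\<lambda>_. 0) (\<lambda>zs. Suc (triangle (zs ! 3 + zs ! 0) + zs ! 3)) n xs = list_code_bound n (xs ! 1)"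
  by (induction n) (auto simp: prod_encode_def numeral_3_eq_3)

lemma rec_computable_list_code_bound [rec_computable_intros]:
  "rec_computable k D f \<Longrightarrow> rec_computable k D g \<Longrightarrow> rec_computable k D (\<lambda>xs. list_code_bound (f xs) (g xs))"
proof (rule rec_computable_compose2[where F=list_code_bound])
  have "rec_computable 2 (\<lambda>_. True)
          (\<lambda>xs. prim_rec (\<lambda>_. 0) (\<lambda>zs. Suc (triangle (zs ! 3 + zs ! 0) + zs ! 3)) (xs ! 0) xs)"
    by (rule rec_computable_prim_rec[where E="\<lambda>_. True"]) (auto intro!: rec_computable_intros)
  then show "rec_computable 2 (\<lambda>_. True) (\<lambda>ys. list_code_bound (ys ! 0) (ys ! 1))"
    by (rule rec_computable_cong) (simp add: prim_rec_list_code_bound)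
qed

section \<open>Nesting relations\<close>

definition return_of :: "(nat \<times> nat) set \<Rightarrow> nat \<Rightarrow> nat" where
  "return_of \<nu> c = (THE r. (c, r) \<in> \<nu>)"

definition pending_calls :: "(nat \<times> nat) set \<Rightarrow> nat \<Rightarrow> nat set" where
  "pending_calls \<nu> i = {c. \<exists>r. (c, r) \<in> \<nu> \<and> c \<le> i \<and> i < r}"

lemma finite_pending_calls: "finite (pending_calls \<nu> i)"
  by (rule finite_subset[of _ "{..i}"]) (auto simp: pending_calls_def)

context
  fixes n :: nat and \<nu> :: "(nat \<times> nat) set"
  assumes nesting: "nesting n \<nu>"
begin

lemma nesting_less: "(i, j) \<in> \<nu> \<Longrightarrow> i < j"
  and nesting_return_unique: "(i, j) \<in> \<nu> \<Longrightarrow> (i, j') \<in> \<nu> \<Longrightarrow> j = j'"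
  and nesting_call_unique: "(i, j) \<in> \<nu> \<Longrightarrow> (i', j) \<in> \<nu> \<Longrightarrow> i = i'"
  and nesting_cross: "(i, j) \<in> \<nu> \<Longrightarrow> (i', j') \<in> \<nu> \<Longrightarrow> i < i' \<Longrightarrow> j < i' \<or> j' < j"
  and nesting_bounds: "(i, j) \<in> \<nu> \<Longrightarrow> 1 \<le> i \<and> j \<le> n"
  using nesting unfolding nesting_def by auto

lemma nesting_call_not_return: "(c, r) \<in> \<nu> \<Longrightarrow> (x, c) \<in> \<nu> \<Longrightarrow> False"
  using nesting_cross[of x c c r] nesting_less[of x c] nesting_less[of c r] by auto

lemma nesting_matched_interval_closed:
  assumes cr: "(c, r) \<in> \<nu>" and xy: "(x, y) \<in> \<nu>"
  shows "(c \<le> x \<and> x \<le> r) \<longleftrightarrow> (c \<le> y \<and> y \<le> r)"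
proof -
  have "c < r" "x < y"
    using nesting_less cr xy by auto
  moreover have "x = c \<longleftrightarrow> y = r"
    using nesting_return_unique[OF cr] nesting_call_unique[OF cr] xy by auto
  moreover have "x \<noteq> r" "y \<noteq> c"
    using nesting_call_not_return cr xy by blast+
  moreover have "c < x \<Longrightarrow> r < x \<or> y < r" "x < c \<Longrightarrow> y < c \<or> r < y"
    using nesting_cross[OF cr xy] nesting_cross[OF xy cr] by auto
  ultimately show ?thesis
    by linarith
qed

lemma return_of_eq: "(c, r) \<in> \<nu> \<Longrightarrow> return_of \<nu> c = r"
  unfolding return_of_def using nesting_return_unique by blast

lemma pending_calls_return_of:
  assumes "c \<in> pending_calls \<nu> i"
  shows "(c, return_of \<nu> c) \<in> \<nu>" "1 \<le> c" "c \<le> i" "i < return_of \<nu> c" "return_of \<nu> c \<le> n"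
  using assms return_of_eq nesting_bounds unfolding pending_calls_def by fastforce+

lemma pending_calls_return_of_less:
  assumes "c \<in> pending_calls \<nu> i" "c' \<in> pending_calls \<nu> i" "c < c'"
  shows "return_of \<nu> c' < return_of \<nu> c"
  using nesting_cross[OF pending_calls_return_of(1)[OF assms(1)] pending_calls_return_of(1)[OF assms(2)]]
    pending_calls_return_of[OF assms(1)] pending_calls_return_of[OF assms(2)] assms(3)
  by auto

lemma pending_calls_before_call:
  assumes c: "c \<in> pending_calls \<nu> i"
  shows "pending_calls \<nu> (c - 1) = {x \<in> pending_calls \<nu> i. x < c}"
proof (intro equalityI subsetI)
  note cr = pending_calls_return_of[OF c]
  fix x
  assume "x \<in> pending_calls \<nu> (c - 1)"
  then obtain r where xr: "(x, r) \<in> \<nu>" "x < c" "c \<le> r"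
    using cr(2) by (auto simp: pending_calls_def)
  then have "c < r"
    using nesting_call_not_return[OF cr(1)] by (cases "r = c") auto
  with xr show "x \<in> {x \<in> pending_calls \<nu> i. x < c}"
    using nesting_cross[OF xr(1) cr(1)] cr by (auto simp: pending_calls_def)
next
  fix x
  assume "x \<in> {x \<in> pending_calls \<nu> i. x < c}"
  then have x: "x \<in> pending_calls \<nu> i" "x < c"
    by auto
  then have "return_of \<nu> c < return_of \<nu> x"
    using pending_calls_return_of_less c by blast
  then show "x \<in> pending_calls \<nu> (c - 1)"
    using pending_calls_return_of[OF x(1)] pending_calls_return_of[OF c] x(2)
    unfolding pending_calls_def by (intro CollectI exI[of _ "return_of \<nu> x"]) auto
qed

lemma pending_calls_eq_interval_closed:
  assumes ab: "a < b" and eq: "pending_calls \<nu> a = pending_calls \<nu> b" and xy: "(x, y) \<in> \<nu>"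
  shows "(a < x \<and> x \<le> b) \<longleftrightarrow> (a < y \<and> y \<le> b)"
proof -
  have "x \<notin> pending_calls \<nu> b" if "a < x"
  proof
    assume "x \<in> pending_calls \<nu> b"
    then have "x \<in> pending_calls \<nu> a"
      using eq by simp
    with that show False
      by (simp add: pending_calls_def)
  qed
  moreover have "b < return_of \<nu> x" if "x \<in> pending_calls \<nu> a"
    using that eq pending_calls_return_of by blast
  ultimately show ?thesis
    using nesting_less[OF xy] return_of_eq[OF xy] xy unfolding pending_calls_def by fastforce
qed

end

lemma nesting_restrict:
  assumes nesting: "nesting n \<nu>" and mono: "strict_mono_on {1..L} e"
  shows "nesting L {(i, j). i \<in> {1..L} \<and> j \<in> {1..L} \<and> (e i, e j) \<in> \<nu>}"
proof -
  have less_iff: "e i < e j \<longleftrightarrow> i < j" if "i \<in> {1..L}" "j \<in> {1..L}" for i j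
    using strict_mono_on_less[OF mono that] .
  have inj: "inj_on e {1..L}"
    using strict_mono_on_imp_inj_on[OF mono] .
  let ?\<nu> = "{(i, j). i \<in> {1..L} \<and> j \<in> {1..L} \<and> (e i, e j) \<in> \<nu>}"
  show ?thesis
    unfolding nesting_def
  proof (intro conjI allI impI)
    show "?\<nu> \<subseteq> {1..L} \<times> {1..L}"
      by auto
  next
    fix i j
    assume "(i, j) \<in> ?\<nu>"
    then show "i < j"
      using nesting_less[OF nesting] less_iff by auto
  next
    fix i j j'
    assume "(i, j) \<in> ?\<nu>" "(i, j') \<in> ?\<nu>"
    then show "j = j'"
      using nesting_return_unique[OF nesting] inj_onD[OF inj] by blast
  next
    fix i i' j
    assume "(i, j) \<in> ?\<nu>" "(i', j) \<in> ?\<nu>"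
    then show "i = i'"
      using nesting_call_unique[OF nesting] inj_onD[OF inj] by blast
  next
    fix i j i' j'
    assume "(i, j) \<in> ?\<nu>" "(i', j') \<in> ?\<nu>" "i < i'"
    then show "j < i' \<or> j' < j"
      using nesting_cross[OF nesting, of "e i" "e j" "e i'" "e j'"] less_iff by auto
  qed
qed

definition run_weight :: "'k::comm_semiring_1 wnwa \<Rightarrow> nat list \<Rightarrow> (nat \<times> nat) set \<Rightarrow> nat list \<Rightarrow> 'k" where
  "run_weight A w \<nu> qs =
     iota A (qs ! 0) * (\<Prod>j\<in>{1..length w}. pos_weight A w \<nu> qs j) * kappa A (qs ! length w)"

definition has_nonzero_run :: "'k::comm_semiring_1 wnwa \<Rightarrow> nat \<Rightarrow> nat \<Rightarrow> bool" where
  "has_nonzero_run A m L \<longleftrightarrow>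
     (\<exists>w \<nu> qs. (w, \<nu>) \<in> NW m \<and> length w = L \<and> qs \<in> runs A L \<and> run_weight A w \<nu> qs \<noteq> 0)"

lemma finite_runs: "finite (runs A n)"
  by (rule finite_subset[OF _ finite_lists_length_eq[of "{..<nst A}" "Suc n"]]) (auto simp: runs_def)

lemma sum_eq_zero_iff_zero_sum_free:
  fixes g :: "'a \<Rightarrow> 'k::comm_semiring_1"
  assumes zsf: "zero_sum_free TYPE('k)" and "finite X"
  shows "sum g X = 0 \<longleftrightarrow> (\<forall>x\<in>X. g x = 0)"
  using assms(2)
proof (induction X rule: finite_induct)
  case (insert x X)
  have "g x + sum g X = 0 \<longleftrightarrow> g x = 0 \<and> sum g X = 0"
    using zsf unfolding zero_sum_free_def by (metis add_0)
  then show ?case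
    using insert by simp
qed simp

lemma behaviour_neq_zero_iff:
  assumes "zero_sum_free TYPE('k::comm_semiring_1)"
  shows "behaviour (A :: 'k wnwa) (w, \<nu>) \<noteq> 0 \<longleftrightarrow> (\<exists>qs\<in>runs A (length w). run_weight A w \<nu> qs \<noteq> 0)"
proof -
  have "behaviour A (w, \<nu>) = (\<Sum>qs\<in>runs A (length w). run_weight A w \<nu> qs)"
    by (simp add: behaviour_def run_weight_def)
  then show ?thesis
    using sum_eq_zero_iff_zero_sum_free[OF assms finite_runs] by auto
qed

text \<open>Keeping only the positions \<open>e 1 < \<dots> < e L\<close> of a nested word and of a run on it:
  no call may be separated from its return, and the run must be in the same state before
  \<open>e j\<close> as after \<open>e (j - 1)\<close>.\<close>

locale run_restriction =
  fixes w :: "nat list" and \<nu> :: "(nat \<times> nat) set" and qs :: "nat list" and e :: "nat \<Rightarrow> nat" and L :: nat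
  assumes nesting: "nesting (length w) \<nu>" and mono: "strict_mono_on {1..L} e"
    and range: "e ` {1..L} \<subseteq> {1..length w}"
    and closed: "\<And>x y. (x, y) \<in> \<nu> \<Longrightarrow> x \<in> e ` {1..L} \<longleftrightarrow> y \<in> e ` {1..L}"
    and e0: "e 0 = 0" and glue: "\<And>j. j \<in> {1..L} \<Longrightarrow> qs ! (e j - 1) = qs ! e (j - 1)"
begin

definition word :: "nat list" where
  "word = map (\<lambda>j. w ! (e (Suc j) - 1)) [0..<L]"

definition nest :: "(nat \<times> nat) set" where
  "nest = {(i, j). i \<in> {1..L} \<and> j \<in> {1..L} \<and> (e i, e j) \<in> \<nu>}"

definition run :: "nat list" where
  "run = map (\<lambda>j. qs ! e j) [0..<Suc L]"

lemma length_word: "length word = L"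
  by (simp add: word_def)

lemma e_bounds: "j \<in> {1..L} \<Longrightarrow> 1 \<le> e j \<and> e j \<le> length w"
  using subsetD[OF range, of "e j"] by auto

lemma word_nth: "j \<in> {1..L} \<Longrightarrow> word ! (j - 1) = w ! (e j - 1)"
  by (cases j) (auto simp: word_def)

lemma run_nth: "j \<le> L \<Longrightarrow> run ! j = qs ! e j"
  by (simp add: run_def nth_Cons' del: upt_Suc)

lemma nesting_nest: "nesting L nest"
  unfolding nest_def by (rule nesting_restrict[OF nesting mono])

lemma word_in_NW:
  assumes "set w \<subseteq> {..<m}" "0 < L"
  shows "(word, nest) \<in> NW m"
proof -
  have "w ! (e (Suc j) - 1) < m" if "j < L" for j
  proof -
    have "e (Suc j) - 1 < length w"
      using e_bounds[of "Suc j"] that by auto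
    then show ?thesis
      using assms(1) by (meson lessThan_iff nth_mem subsetD)
  qed
  then show ?thesis
    using nesting_nest assms(2) by (auto simp: NW_def word_def)
qed

lemma run_in_runs:
  assumes "qs \<in> runs A (length w)"
  shows "run \<in> runs A L"
proof -
  have qs: "length qs = Suc (length w)" "set qs \<subseteq> {..<nst A}"
    using assms by (auto simp: runs_def)
  have "qs ! e j < nst A" if "j \<le> L" for j
  proof -
    have "e j < length qs"
      using e_bounds[of j] e0 qs(1) that by (cases "j = 0") auto
    then show ?thesis
      using qs(2) by (meson lessThan_iff nth_mem subsetD)
  qed
  then show ?thesis
    by (auto simp: runs_def run_def simp del: upt_Suc)
qed

lemma pos_weight_restrict:
  assumes j: "j \<in> {1..L}"
  shows "pos_weight A word nest run j = pos_weight A w \<nu> qs (e j)"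
proof -
  have partner_kept: "\<exists>k\<in>{1..L}. x = e k" if "(x, y) \<in> \<nu> \<or> (y, x) \<in> \<nu>" "y \<in> e ` {1..L}" for x y
    using closed that by blast
  have call: "(\<exists>k. (j, k) \<in> nest) \<longleftrightarrow> (\<exists>k. (e j, k) \<in> \<nu>)"
    and return: "(\<exists>i. (i, j) \<in> nest) \<longleftrightarrow> (\<exists>i. (i, e j) \<in> \<nu>)"
    using partner_kept j unfolding nest_def by blast+
  have call_state: "run ! ((THE i. (i, j) \<in> nest) - 1) = qs ! ((THE i. (i, e j) \<in> \<nu>) - 1)"
    if ret: "(i, e j) \<in> \<nu>" for i
  proof -
    obtain i' where i': "i' \<in> {1..L}" "i = e i'"
      using partner_kept ret j by blast
    then have "(i', j) \<in> nest"
      using ret j by (simp add: nest_def)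
    then have "(THE i. (i, j) \<in> nest) = i'" "(THE i'. (i', e j) \<in> \<nu>) = i"
      using nesting_call_unique[OF nesting_nest] nesting_call_unique[OF nesting] ret by blast+
    then show ?thesis
      using glue[OF i'(1)] run_nth[of "i' - 1"] i' by auto
  qed
  show ?thesis
    unfolding pos_weight_def call return
    using call_state word_nth[OF j] run_nth[of j] run_nth[of "j - 1"] glue[OF j] j by auto
qed

lemma run_weight_restrict:
  assumes "qs ! e L = qs ! length w"
  shows "run_weight A w \<nu> qs = run_weight A word nest run * (\<Prod>k\<in>{1..length w} - e ` {1..L}. pos_weight A w \<nu> qs k)"
proof -
  have "(\<Prod>j\<in>{1..L}. pos_weight A word nest run j) = (\<Prod>j\<in>{1..L}. pos_weight A w \<nu> qs (e j))"
    by (rule prod.cong) (simp_all add: pos_weight_restrict)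
  also have "\<dots> = (\<Prod>k\<in>e ` {1..L}. pos_weight A w \<nu> qs k)"
    using prod.reindex[OF strict_mono_on_imp_inj_on[OF mono], of "pos_weight A w \<nu> qs"]
    by (simp add: comp_def)
  finally have "(\<Prod>k\<in>{1..length w}. pos_weight A w \<nu> qs k) =
      (\<Prod>j\<in>{1..length word}. pos_weight A word nest run j) * (\<Prod>k\<in>{1..length w} - e ` {1..L}. pos_weight A w \<nu> qs k)"
    using prod.subset_diff[OF range] by (simp add: length_word mult.commute)
  then show ?thesis
    using run_nth[of 0] run_nth[of L] e0 assms by (simp add: run_weight_def length_word ac_simps)
qed

end

lemma has_nonzero_run_restrict:
  fixes A :: "'k::comm_semiring_1 wnwa"
  assumes NW: "(w, \<nu>) \<in> NW m" and R: "qs \<in> runs A (length w)" and nz: "run_weight A w \<nu> qs \<noteq> 0"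
    and L: "0 < L" and restriction: "run_restriction w \<nu> qs e L"
    and last: "qs ! e L = qs ! length w"
  shows "has_nonzero_run A m L"
proof -
  interpret run_restriction w \<nu> qs e L
    by (fact restriction)
  have "run_weight A word nest run \<noteq> 0"
    using nz run_weight_restrict[OF last, of A] by auto
  moreover have "(word, nest) \<in> NW m"
    using NW by (intro word_in_NW[OF _ L]) (simp add: NW_def)
  ultimately show ?thesis
    unfolding has_nonzero_run_def using run_in_runs[OF R] length_word by blast
qed

text \<open>Cutting out the segments \<open>(a, b]\<close> and \<open>(c, d]\<close> between positions where the run
  is in the same state.\<close>

lemma has_nonzero_run_cut:
  fixes A :: "'k::comm_semiring_1 wnwa"
  assumes NW: "(w, \<nu>) \<in> NW m" and R: "qs \<in> runs A (length w)" and nz: "run_weight A w \<nu> qs \<noteq> 0"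
    and abcd: "a \<le> b" "b \<le> c" "c \<le> d" "d \<le> length w"
    and pos: "0 < a + (c - b) + (length w - d)"
    and qab: "qs ! a = qs ! b" and qcd: "qs ! c = qs ! d"
    and closed: "\<And>x y. (x, y) \<in> \<nu> \<Longrightarrow>
        (x \<le> a \<or> (b < x \<and> x \<le> c) \<or> d < x) \<longleftrightarrow> (y \<le> a \<or> (b < y \<and> y \<le> c) \<or> d < y)"
  shows "has_nonzero_run A m (a + (c - b) + (length w - d))"
proof -
  let ?L = "a + (c - b) + (length w - d)"
  define e where
    "e j = (if j \<le> a then j else if j \<le> a + (c - b) then j + (b - a) else j + (b - a) + (d - c))" for j
  have kept: "e ` {1..?L} = {x. 1 \<le> x \<and> x \<le> length w \<and> (x \<le> a \<or> (b < x \<and> x \<le> c) \<or> d < x)}"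
  proof (intro equalityI subsetI)
    fix x
    assume "x \<in> e ` {1..?L}"
    then show "x \<in> {x. 1 \<le> x \<and> x \<le> length w \<and> (x \<le> a \<or> (b < x \<and> x \<le> c) \<or> d < x)}"
      using abcd by (auto simp: e_def)
  next
    fix x
    assume x: "x \<in> {x. 1 \<le> x \<and> x \<le> length w \<and> (x \<le> a \<or> (b < x \<and> x \<le> c) \<or> d < x)}"
    show "x \<in> e ` {1..?L}"
    proof (cases "x \<le> a")
      case True
      then show ?thesis
        using x by (intro image_eqI[of _ _ x]) (auto simp: e_def)
    next
      case not_first: False
      show ?thesis
      proof (cases "x \<le> c")
        case True
        then show ?thesis
          using x not_first abcd by (intro image_eqI[of _ _ "x - (b - a)"]) (auto simp: e_def)
      next
        case False
        then show ?thesis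
          using x not_first abcd by (intro image_eqI[of _ _ "x - (b - a) - (d - c)"]) (auto simp: e_def)
      qed
    qed
  qed
  show ?thesis
  proof (rule has_nonzero_run_restrict[OF NW R nz pos run_restriction.intro])
    show "nesting (length w) \<nu>"
      using NW by (simp add: NW_def)
    show "strict_mono_on {1..?L} e"
      using abcd by (auto simp: strict_mono_on_def e_def)
    show "e ` {1..?L} \<subseteq> {1..length w}"
      using kept by auto
    show "x \<in> e ` {1..?L} \<longleftrightarrow> y \<in> e ` {1..?L}" if "(x, y) \<in> \<nu>" for x y
      using closed[OF that] nesting_bounds[of "length w" \<nu> x y] nesting_less[of "length w" \<nu> x y] that NW
      unfolding kept by (auto simp: NW_def)
    show "e 0 = 0"
      by (simp add: e_def)
    show "qs ! (e j - 1) = qs ! e (j - 1)" if "j \<in> {1..?L}" for j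
    proof -
      consider "j \<le> a" | "j = Suc a" "a < a + (c - b)" | "Suc a < j" "j \<le> a + (c - b)"
        | "j = Suc (a + (c - b))" | "Suc (a + (c - b)) < j"
        by linarith
      then show ?thesis
        using qab qcd abcd that by cases (cases "c = b"; auto simp: e_def)+
    qed
    show "qs ! e ?L = qs ! length w"
      using qab qcd abcd by (cases "c = b"; cases "d = length w") (auto simp: e_def)
  qed
qed

section \<open>A length bound for shortest witnesses\<close>

definition short_run_bound :: "nat \<Rightarrow> nat" where
  "short_run_bound n = n * (n * n + 1) * (n * n) ^ (n * n)"

definition shortest_nonzero_run ::
  "'k::comm_semiring_1 wnwa \<Rightarrow> nat \<Rightarrow> nat list \<Rightarrow> (nat \<times> nat) set \<Rightarrow> nat list \<Rightarrow> bool" where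
  "shortest_nonzero_run A m w \<nu> qs \<longleftrightarrow> (w, \<nu>) \<in> NW m \<and> qs \<in> runs A (length w) \<and>
     run_weight A w \<nu> qs \<noteq> 0 \<and> (\<forall>L < length w. \<not> has_nonzero_run A m L)"

lemma shortest_nonzero_run_exists:
  assumes "has_nonzero_run A m L"
  obtains w \<nu> qs where "shortest_nonzero_run A m w \<nu> qs"
proof -
  define L0 where "L0 = (LEAST L. has_nonzero_run A m L)"
  have "has_nonzero_run A m L0"
    using LeastI[of "has_nonzero_run A m", OF assms] by (simp add: L0_def)
  then obtain w \<nu> qs where w: "(w, \<nu>) \<in> NW m" "length w = L0" "qs \<in> runs A L0" "run_weight A w \<nu> qs \<noteq> 0"
    unfolding has_nonzero_run_def by blast
  have "\<not> has_nonzero_run A m L'" if "L' < L0" for L'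
    using not_less_Least[of L' "has_nonzero_run A m"] that unfolding L0_def by blast
  then have "shortest_nonzero_run A m w \<nu> qs"
    using w unfolding shortest_nonzero_run_def by simp
  then show thesis
    by (rule that)
qed

lemma first_difference:
  assumes "length xs = length ys" "xs \<noteq> ys"
  shows "\<exists>j < length xs. take j xs = take j ys \<and> xs ! j \<noteq> ys ! j"
  using assms
proof (induction xs arbitrary: ys)
  case (Cons x xs)
  then obtain y ys' where ys: "ys = y # ys'"
    by (cases ys) auto
  show ?case
  proof (cases "x = y")
    case True
    then obtain j where "j < length xs" "take j xs = take j ys'" "xs ! j \<noteq> ys' ! j"
      using Cons ys by auto
    then show ?thesis
      using ys True by (intro exI[of _ "Suc j"]) auto
  next
    case False
    then show ?thesis
      using ys by (intro exI[of _ 0]) auto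
  qed
qed simp

lemma set_take_sorted_wrt_less:
  fixes xs :: "'a::linorder list"
  assumes sorted: "sorted_wrt (<) xs" and j: "j < length xs"
  shows "set (take j xs) = {x \<in> set xs. x < xs ! j}"
proof -
  have less_iff: "l < j \<longleftrightarrow> xs ! l < xs ! j" if "l < length xs" for l
    using sorted_wrt_nth_less[OF sorted] that j by (metis less_asym linorder_neqE)
  then have "{x \<in> set xs. x < xs ! j} = (!) xs ` {0..<j}"
  proof (intro equalityI subsetI)
    fix x
    assume "x \<in> {x \<in> set xs. x < xs ! j}"
    then obtain l where "l < length xs" "x = xs ! l" "x < xs ! j"
      by (auto simp: in_set_conv_nth)
    then show "x \<in> (!) xs ` {0..<j}"
      using less_iff by auto
  next
    fix x
    assume "x \<in> (!) xs ` {0..<j}"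
    then obtain l where "l < j" "x = xs ! l"
      by auto
    then show "x \<in> {x \<in> set xs. x < xs ! j}"
      using less_iff[of l] j by auto
  qed
  then show ?thesis
    using j by (simp add: nth_image)
qed

text \<open>The stack content after position \<open>i\<close> as seen by a run: for each pending call, the
  state before the call and the state after the matching return.\<close>

definition call_pairs :: "(nat \<times> nat) set \<Rightarrow> nat list \<Rightarrow> nat \<Rightarrow> (nat \<times> nat) list" where
  "call_pairs \<nu> qs i =
     map (\<lambda>c. (qs ! (c - 1), qs ! return_of \<nu> c)) (sorted_list_of_set (pending_calls \<nu> i))"

context
  fixes A :: "'k::comm_semiring_1 wnwa" and m w \<nu> qs
  assumes shortest: "shortest_nonzero_run A m w \<nu> qs"
begin

lemma shortest_nesting: "nesting (length w) \<nu>"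
  using shortest by (simp add: shortest_nonzero_run_def NW_def)

lemma shortest_state_less: "k \<le> length w \<Longrightarrow> qs ! k < nst A"
  using shortest unfolding shortest_nonzero_run_def runs_def
  by (metis (mono_tags) le_imp_less_Suc lessThan_iff mem_Collect_eq nth_mem subsetD)

lemma shortest_cut:
  assumes "a \<le> b" "b \<le> c" "c \<le> d" "d \<le> length w" "0 < a + (c - b) + (length w - d)"
    "a + (c - b) + (length w - d) < length w"
    "qs ! a = qs ! b" "qs ! c = qs ! d"
    "\<And>x y. (x, y) \<in> \<nu> \<Longrightarrow>
        (x \<le> a \<or> (b < x \<and> x \<le> c) \<or> d < x) \<longleftrightarrow> (y \<le> a \<or> (b < y \<and> y \<le> c) \<or> d < y)"
  shows False
  using has_nonzero_run_cut[of w \<nu> m qs A a b c d] shortest assms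
  unfolding shortest_nonzero_run_def by blast

lemma shortest_pending_calls_neq:
  assumes ab: "a < b" "b \<le> length w" and "0 < a \<or> b < length w" and "qs ! a = qs ! b"
  shows "pending_calls \<nu> a \<noteq> pending_calls \<nu> b"
proof
  assume eq: "pending_calls \<nu> a = pending_calls \<nu> b"
  show False
  proof (rule shortest_cut[of a b b b])
    show "(x \<le> a \<or> (b < x \<and> x \<le> b) \<or> b < x) \<longleftrightarrow> (y \<le> a \<or> (b < y \<and> y \<le> b) \<or> b < y)"
      if "(x, y) \<in> \<nu>" for x y
      using pending_calls_eq_interval_closed[OF shortest_nesting ab(1) eq that] by auto
  qed (use assms in auto)
qed

lemma shortest_pending_calls_neq_sym:
  assumes "a \<noteq> b" "a < length w" "b < length w" "qs ! a = qs ! b"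
  shows "pending_calls \<nu> a \<noteq> pending_calls \<nu> b"
  using shortest_pending_calls_neq[of a b] shortest_pending_calls_neq[of b a] assms
  by (cases "a < b") auto

lemma shortest_nested_calls_neq:
  assumes c1r1: "(c1, r1) \<in> \<nu>" and c2r2: "(c2, r2) \<in> \<nu>" and "c1 < c2" "r2 < r1"
  shows "(qs ! (c1 - 1), qs ! r1) \<noteq> (qs ! (c2 - 1), qs ! r2)"
proof
  assume q: "(qs ! (c1 - 1), qs ! r1) = (qs ! (c2 - 1), qs ! r2)"
  have bounds: "1 \<le> c1" "1 \<le> c2" "r1 \<le> length w" "c2 < r2"
    using nesting_bounds[OF shortest_nesting c1r1] nesting_bounds[OF shortest_nesting c2r2]
      nesting_less[OF shortest_nesting c2r2] by auto
  have "(x \<le> c1 - 1 \<or> (c2 - 1 < x \<and> x \<le> r2) \<or> r1 < x) \<longleftrightarrow>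
        \<not> (c1 \<le> x \<and> x \<le> r1) \<or> (c2 \<le> x \<and> x \<le> r2)" for x
    using bounds \<open>c1 < c2\<close> \<open>r2 < r1\<close> by auto
  then show False
    using nesting_matched_interval_closed[OF shortest_nesting c1r1]
      nesting_matched_interval_closed[OF shortest_nesting c2r2] bounds q \<open>c1 < c2\<close> \<open>r2 < r1\<close>
    by (intro shortest_cut[of "c1 - 1" "c2 - 1" r2 r1]) auto
qed

lemma shortest_call_pairs_distinct: "distinct (call_pairs \<nu> qs i)"
proof -
  have "inj_on (\<lambda>c. (qs ! (c - 1), qs ! return_of \<nu> c)) (pending_calls \<nu> i)"
  proof (rule inj_onI)
    fix c c'
    assume c: "c \<in> pending_calls \<nu> i" and c': "c' \<in> pending_calls \<nu> i"
      and eq: "(qs ! (c - 1), qs ! return_of \<nu> c) = (qs ! (c' - 1), qs ! return_of \<nu> c')"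
    note returns = pending_calls_return_of(1)[OF shortest_nesting]
      pending_calls_return_of_less[OF shortest_nesting]
    show "c = c'"
      using shortest_nested_calls_neq[OF returns(1)[OF c] returns(1)[OF c']] returns(2)[OF c c']
        shortest_nested_calls_neq[OF returns(1)[OF c'] returns(1)[OF c]] returns(2)[OF c' c] eq
      by (metis linorder_neqE)
  qed
  then show ?thesis
    by (simp add: call_pairs_def distinct_map finite_pending_calls)
qed

lemma shortest_call_pairs_range: "set (call_pairs \<nu> qs i) \<subseteq> {..<nst A} \<times> {..<nst A}"
proof -
  have "qs ! (c - 1) < nst A \<and> qs ! return_of \<nu> c < nst A" if "c \<in> pending_calls \<nu> i" for c
    using pending_calls_return_of[OF shortest_nesting that] shortest_state_less by auto
  then show ?thesis
    by (auto simp: call_pairs_def finite_pending_calls)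
qed

text \<open>Two positions with the same state and the same call pairs would allow a cut: either
  the pending calls agree, or the first differing pending calls are two calls in the same
  state whose pending calls agree.\<close>

lemma shortest_call_pairs_neq:
  assumes i: "1 \<le> i" "i < i'" "i' \<le> length w" and state: "qs ! i = qs ! i'"
  shows "call_pairs \<nu> qs i \<noteq> call_pairs \<nu> qs i'"
proof
  assume same: "call_pairs \<nu> qs i = call_pairs \<nu> qs i'"
  define cs where "cs i = sorted_list_of_set (pending_calls \<nu> i)" for i
  have cs: "set (cs i) = pending_calls \<nu> i" "sorted_wrt (<) (cs i)" for i
    by (simp_all add: cs_def finite_pending_calls strict_sorted_list_of_set)
  have len: "length (cs i) = length (cs i')"
    using arg_cong[OF same, of length] by (simp add: call_pairs_def cs_def)
  have "cs i \<noteq> cs i'"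
    using shortest_pending_calls_neq[of i i'] i state cs(1)[of i] cs(1)[of i'] by auto
  then obtain j where j: "j < length (cs i)" "take j (cs i) = take j (cs i')" "cs i ! j \<noteq> cs i' ! j"
    using first_difference len by blast
  define c c' where "c = cs i ! j" and "c' = cs i' ! j"
  have pending: "c \<in> pending_calls \<nu> i" "c' \<in> pending_calls \<nu> i'"
    using cs(1) j(1) len nth_mem unfolding c_def c'_def by metis+
  have stack_eq: "pending_calls \<nu> (c - 1) = pending_calls \<nu> (c' - 1)"
    using pending_calls_before_call[OF shortest_nesting pending(1)]
      pending_calls_before_call[OF shortest_nesting pending(2)]
      set_take_sorted_wrt_less[OF cs(2) j(1)] set_take_sorted_wrt_less[OF cs(2), of j i'] j len cs(1)
    unfolding c_def c'_def by simp
  have state_eq: "qs ! (c - 1) = qs ! (c' - 1)"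
    using arg_cong[OF same, of "\<lambda>ps. fst (ps ! j)"] j(1) len
    by (simp add: call_pairs_def c_def c'_def flip: cs_def)
  have bounds: "1 \<le> c" "1 \<le> c'" "c < length w" "c' < length w"
    using pending_calls_return_of[OF shortest_nesting pending(1)]
      pending_calls_return_of[OF shortest_nesting pending(2)] by auto
  have "c - 1 \<noteq> c' - 1"
    using j(3) bounds by (auto simp: c_def c'_def)
  then show False
    using shortest_pending_calls_neq_sym[OF _ _ _ state_eq] stack_eq bounds by auto
qed

lemma shortest_profile_inj: "inj_on (\<lambda>i. (qs ! i, call_pairs \<nu> qs i)) {1..length w}"
proof (rule inj_onI)
  fix i i'
  assume "i \<in> {1..length w}" "i' \<in> {1..length w}"
    and "(qs ! i, call_pairs \<nu> qs i) = (qs ! i', call_pairs \<nu> qs i')"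
  then show "i = i'"
    using shortest_call_pairs_neq[of i i'] shortest_call_pairs_neq[of i' i]
    by (cases i i' rule: linorder_cases) auto
qed

lemma shortest_length_bound: "length w \<le> short_run_bound (nst A)"
proof -
  let ?n = "nst A" and ?N = "nst A * nst A"
  define P where "P = {..<?n} \<times> {ps. set ps \<subseteq> {..<?n} \<times> {..<?n} \<and> length ps \<le> ?N}"
  have "length (call_pairs \<nu> qs i) \<le> ?N" for i
    using card_mono[OF _ shortest_call_pairs_range] distinct_card[OF shortest_call_pairs_distinct]
    by (simp add: card_cartesian_product)
  then have profiles: "(\<lambda>i. (qs ! i, call_pairs \<nu> qs i)) ` {1..length w} \<subseteq> P"
    using shortest_state_less shortest_call_pairs_range by (auto simp: P_def)
  have "length w = card ((\<lambda>i. (qs ! i, call_pairs \<nu> qs i)) ` {1..length w})"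
    using card_image[OF shortest_profile_inj] by simp
  also have "\<dots> \<le> card P"
    using profiles by (intro card_mono) (simp_all add: P_def finite_lists_length_le)
  also have "\<dots> = ?n * (\<Sum>i\<le>?N. ?N ^ i)"
    by (simp add: P_def card_cartesian_product card_lists_length_le)
  also have "\<dots> \<le> ?n * (\<Sum>i\<le>?N. ?N ^ ?N)"
    by (intro mult_left_mono sum_mono) (cases "?N = 0"; auto intro: power_increasing)+
  also have "\<dots> = short_run_bound ?n"
    by (simp add: short_run_bound_def algebra_simps)
  finally show ?thesis .
qed

end

theorem nonzero_run_short:
  fixes A :: "'k::comm_semiring_1 wnwa"
  assumes "(w, \<nu>) \<in> NW m" "qs \<in> runs A (length w)" "run_weight A w \<nu> qs \<noteq> 0"
  obtains w' \<nu>' qs' where "(w', \<nu>') \<in> NW m" "qs' \<in> runs A (length w')" "run_weight A w' \<nu>' qs' \<noteq> 0"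
    "length w' \<le> short_run_bound (nst A)"
proof -
  have "has_nonzero_run A m (length w)"
    using assms unfolding has_nonzero_run_def by blast
  then obtain w' \<nu>' qs' where "shortest_nonzero_run A m w' \<nu>' qs'"
    by (rule shortest_nonzero_run_exists)
  then show thesis
    using that shortest_length_bound unfolding shortest_nonzero_run_def by blast
qed

text \<open>Entry \<open>k\<close> of a partner list is the partner of position \<open>k + 1\<close> (positions are
  1-based), or \<open>0\<close> if that position is internal.\<close>

definition partners_wf :: "nat \<Rightarrow> (nat \<Rightarrow> nat) \<Rightarrow> bool" where
  "partners_wf L p \<longleftrightarrow> (\<forall>k<L. p k \<le> L \<and> p k \<noteq> Suc k \<and> (p k \<noteq> 0 \<longrightarrow> p (p k - 1) = Suc k) \<and>
     (\<forall>l<L. k < l \<longrightarrow> Suc k < p k \<longrightarrow> Suc l < p l \<longrightarrow> p l < p k \<or> p k < Suc l))"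

definition partner_nesting :: "nat list \<Rightarrow> (nat \<times> nat) set" where
  "partner_nesting ps = {(j, ps ! (j - 1)) | j. 1 \<le> j \<and> j \<le> length ps \<and> j < ps ! (j - 1)}"

lemma partners_wfD:
  assumes "partners_wf L p" "k < L"
  shows "p k \<le> L" "p k \<noteq> Suc k" "p k \<noteq> 0 \<Longrightarrow> p (p k - 1) = Suc k"
    "l < L \<Longrightarrow> k < l \<Longrightarrow> Suc k < p k \<Longrightarrow> Suc l < p l \<Longrightarrow> p l < p k \<or> p k < Suc l"
  using assms unfolding partners_wf_def by blast+

lemma partner_nesting_iff:
  "(i, j) \<in> partner_nesting ps \<longleftrightarrow> 1 \<le> i \<and> i \<le> length ps \<and> i < ps ! (i - 1) \<and> j = ps ! (i - 1)"
  unfolding partner_nesting_def by auto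

lemma partner_nesting_call:
  assumes "1 \<le> j" "j \<le> length ps"
  shows "(\<exists>k. (j, k) \<in> partner_nesting ps) \<longleftrightarrow> j < ps ! (j - 1)"
  using assms by (auto simp: partner_nesting_iff)

context
  fixes ps :: "nat list"
  assumes wf: "partners_wf (length ps) ((!) ps)"
begin

lemma partners_wf_partner:
  assumes "1 \<le> j" "j \<le> length ps" "ps ! (j - 1) \<noteq> 0"
  shows "ps ! (ps ! (j - 1) - 1) = j"
  using partners_wfD(3)[OF wf, of "j - 1"] assms by simp

lemma nesting_partner_nesting: "nesting (length ps) (partner_nesting ps)"
  unfolding nesting_def
proof (intro conjI allI impI)
  show "partner_nesting ps \<subseteq> {1..length ps} \<times> {1..length ps}"
    using partners_wfD(1)[OF wf] by (force simp: partner_nesting_def)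
next
  fix i j
  assume "(i, j) \<in> partner_nesting ps"
  then show "i < j"
    by (simp add: partner_nesting_iff)
next
  fix i j j'
  assume "(i, j) \<in> partner_nesting ps" "(i, j') \<in> partner_nesting ps"
  then show "j = j'"
    by (simp add: partner_nesting_iff)
next
  fix i i' j
  assume "(i, j) \<in> partner_nesting ps" "(i', j) \<in> partner_nesting ps"
  then show "i = i'"
    using partners_wf_partner[of i] partners_wf_partner[of i'] by (auto simp: partner_nesting_iff)
next
  fix i j i' j'
  assume "(i, j) \<in> partner_nesting ps" "(i', j') \<in> partner_nesting ps" "i < i'"
  then show "j < i' \<or> j' < j"
    using partners_wfD(4)[OF wf, of "i - 1" "i' - 1"] by (auto simp: partner_nesting_iff)
qed

lemma partner_nesting_return:
  assumes j: "1 \<le> j" "j \<le> length ps" and "0 < ps ! (j - 1)" "ps ! (j - 1) < j"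
  shows "(ps ! (j - 1), j) \<in> partner_nesting ps"
proof -
  have "ps ! (ps ! (j - 1) - 1) = j"
    using partners_wf_partner assms by auto
  then show ?thesis
    using assms by (auto simp: partner_nesting_iff)
qed

lemma partner_nesting_return_iff:
  assumes j: "1 \<le> j" "j \<le> length ps"
  shows "(\<exists>i. (i, j) \<in> partner_nesting ps) \<longleftrightarrow> 0 < ps ! (j - 1) \<and> ps ! (j - 1) < j"
proof
  assume "\<exists>i. (i, j) \<in> partner_nesting ps"
  then show "0 < ps ! (j - 1) \<and> ps ! (j - 1) < j"
    using partners_wf_partner by (auto simp: partner_nesting_iff)
next
  assume "0 < ps ! (j - 1) \<and> ps ! (j - 1) < j"
  then show "\<exists>i. (i, j) \<in> partner_nesting ps"
    using partner_nesting_return[OF j] by blast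
qed

lemma The_call_partner_nesting:
  assumes "1 \<le> j" "j \<le> length ps" "0 < ps ! (j - 1)" "ps ! (j - 1) < j"
  shows "(THE i. (i, j) \<in> partner_nesting ps) = ps ! (j - 1)"
  using partner_nesting_return[OF assms] nesting_call_unique[OF nesting_partner_nesting] by blast

end

definition partner :: "(nat \<times> nat) set \<Rightarrow> nat \<Rightarrow> nat" where
  "partner \<nu> j =
     (if \<exists>k. (j, k) \<in> \<nu> then return_of \<nu> j else if \<exists>i. (i, j) \<in> \<nu> then (THE i. (i, j) \<in> \<nu>) else 0)"

definition partner_list :: "(nat \<times> nat) set \<Rightarrow> nat \<Rightarrow> nat list" where
  "partner_list \<nu> n = map (\<lambda>k. partner \<nu> (Suc k)) [0..<n]"

lemma length_partner_list [simp]: "length (partner_list \<nu> n) = n"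
  by (simp add: partner_list_def)

context
  fixes n :: nat and \<nu> :: "(nat \<times> nat) set"
  assumes nesting: "nesting n \<nu>"
begin

lemma partner_call: "(j, k) \<in> \<nu> \<Longrightarrow> partner \<nu> j = k"
  unfolding partner_def using return_of_eq[OF nesting] by auto

lemma partner_return: "(i, j) \<in> \<nu> \<Longrightarrow> partner \<nu> j = i"
  unfolding partner_def using nesting_call_not_return[OF nesting] nesting_call_unique[OF nesting]
  by (auto intro: the_equality)

lemma partner_cases:
  obtains "(j, partner \<nu> j) \<in> \<nu>" "j < partner \<nu> j"
    | "(partner \<nu> j, j) \<in> \<nu>" "0 < partner \<nu> j" "partner \<nu> j < j"
    | "partner \<nu> j = 0" "\<nexists>k. (j, k) \<in> \<nu>" "\<nexists>i. (i, j) \<in> \<nu>"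
proof (cases "\<exists>k. (j, k) \<in> \<nu>")
  case True
  then obtain k where "(j, k) \<in> \<nu>"
    by blast
  then show thesis
    using that(1) partner_call nesting_less[OF nesting] by simp
next
  case no_call: False
  show thesis
  proof (cases "\<exists>i. (i, j) \<in> \<nu>")
    case True
    then obtain i where ij: "(i, j) \<in> \<nu>"
      by blast
    have "0 < i" "i < j"
      using nesting_bounds[OF nesting ij] nesting_less[OF nesting ij] by auto
    then show thesis
      using that(2) partner_return[OF ij] ij by simp
  next
    case False
    then show thesis
      using that(3) no_call by (simp add: partner_def)
  qed
qed

lemma partner_le: "partner \<nu> j \<le> n"
proof (cases rule: partner_cases[of j])
  case 1
  then show ?thesis
    using nesting_bounds[OF nesting] by blast
next
  case 2
  then show ?thesis
    using nesting_bounds[OF nesting] by (meson le_trans less_imp_le)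
qed simp

lemma partner_nesting_partner_list: "partner_nesting (partner_list \<nu> n) = \<nu>"
proof (intro equalityI subsetI)
  fix x
  assume "x \<in> partner_nesting (partner_list \<nu> n)"
  then obtain j where "x = (j, partner \<nu> j)" "1 \<le> j" "j \<le> n" "j < partner \<nu> j"
    unfolding partner_nesting_def partner_list_def by auto
  then show "x \<in> \<nu>"
    by (cases rule: partner_cases[of j]) auto
next
  fix x
  assume x: "x \<in> \<nu>"
  obtain i j where ij: "x = (i, j)"
    by (cases x)
  have bounds: "1 \<le> i" "i < j" "j \<le> n"
    using nesting_bounds[OF nesting] nesting_less[OF nesting] x ij by auto
  then have "i - 1 < n"
    by linarith
  then have "partner_list \<nu> n ! (i - 1) = j"
    using partner_call[of i j] x ij bounds by (simp add: partner_list_def)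
  with bounds show "x \<in> partner_nesting (partner_list \<nu> n)"
    unfolding ij partner_nesting_iff by auto
qed

lemma partners_wf_partner_list: "partners_wf n ((!) (partner_list \<nu> n))"
proof -
  let ?ps = "partner_list \<nu> n"
  have ps: "?ps ! k = partner \<nu> (Suc k)" if "k < n" for k
    using that by (simp add: partner_list_def)
  have call: "(Suc k, ?ps ! k) \<in> \<nu>" if "k < n" "Suc k < ?ps ! k" for k
    using that ps[OF that(1)] by (cases rule: partner_cases[of "Suc k"]) auto
  show ?thesis
    unfolding partners_wf_def
  proof (intro allI impI conjI)
    fix k
    assume k: "k < n"
    show "?ps ! k \<le> n"
      using partner_le ps[OF k] by simp
    show "?ps ! k \<noteq> Suc k"
      using ps[OF k] by (cases rule: partner_cases[of "Suc k"]) auto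
    show "?ps ! (?ps ! k - 1) = Suc k" if "?ps ! k \<noteq> 0"
    proof (cases rule: partner_cases[of "Suc k"])
      case 1
      then show ?thesis
        using ps[of "?ps ! k - 1"] ps[OF k] partner_return[OF 1(1)] nesting_bounds[OF nesting 1(1)] by simp
    next
      case 2
      then show ?thesis
        using ps[of "?ps ! k - 1"] ps[OF k] partner_call[OF 2(1)] k by simp
    qed (use that ps[OF k] in simp)
    fix l
    assume "l < n" "k < l" "Suc k < ?ps ! k" "Suc l < ?ps ! l"
    then show "?ps ! l < ?ps ! k \<or> ?ps ! k < Suc l"
      using nesting_cross[OF nesting call[OF k] call[of l]] by auto
  qed
qed

end

lemma nth_concat_map_uniform:
  assumes "\<forall>x\<in>set xs. length (f x) = K" "i < length xs" "r < K"
  shows "concat (map f xs) ! (i * K + r) = f (xs ! i) ! r"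
  using assms
proof (induction xs arbitrary: i)
  case (Cons x xs)
  then show ?case
    by (cases i) (auto simp: nth_append)
qed simp

lemma mult_add_less_mult:
  assumes "(x::nat) < X" "q < Q"
  shows "x * Q + q < X * Q"
proof -
  have "x * Q + q < Suc x * Q"
    using assms(2) by simp
  also have "\<dots> \<le> X * Q"
    using assms(1) by (intro mult_right_mono) auto
  finally show ?thesis .
qed

lemma index3_less: "(p::nat) < n \<Longrightarrow> a < k \<Longrightarrow> q < n \<Longrightarrow> (p * k + a) * n + q < n * k * n"
  by (intro mult_add_less_mult) auto

lemma nth_concat_map3:
  assumes "p < n" "a < m" "q < n'"
  shows "concat (map (\<lambda>p. concat (map (\<lambda>a. map (\<lambda>q. f p a q) [0..<n']) [0..<m])) [0..<n]) ! ((p * m + a) * n' + q)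
    = f p a q"
proof -
  have inner: "concat (map (\<lambda>a. map (\<lambda>q. f p a q) [0..<n']) [0..<m]) ! (a * n' + q) = f p a q"
    using nth_concat_map_uniform[of "[0..<m]" "\<lambda>a. map (\<lambda>q. f p a q) [0..<n']" n' a q] assms by simp
  have len: "\<forall>p\<in>set [0..<n]. length (concat (map (\<lambda>a. map (\<lambda>q. f p a q) [0..<n']) [0..<m])) = m * n'"
    by (simp add: length_concat comp_def sum_list_triv)
  have split: "(p * m + a) * n' + q = p * (m * n') + (a * n' + q)"
    by (simp add: algebra_simps)
  have "a * n' + q < m * n'"
    using mult_add_less_mult assms by blast
  then show ?thesis
    unfolding split using nth_concat_map_uniform[OF len, of p "a * n' + q"] inner assms by simp
qed

lemma length_concat_map3:
  "length (concat (map (\<lambda>p. concat (map (\<lambda>a. map (\<lambda>q. f p a q) [0..<n']) [0..<m])) [0..<n])) = n * m * n'"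
  by (simp add: length_concat comp_def sum_list_triv)

definition wnwa_table :: "nat \<Rightarrow> ('k \<Rightarrow> nat) \<Rightarrow> 'k wnwa \<Rightarrow> nat list" where
  "wnwa_table m enc A = (let n = nst A in
      [n]
    @ [enc (iota A p). p \<leftarrow> [0..<n]]
    @ [enc (dcall A p a q). p \<leftarrow> [0..<n], a \<leftarrow> [0..<m], q \<leftarrow> [0..<n]]
    @ [enc (dint A p a q). p \<leftarrow> [0..<n], a \<leftarrow> [0..<m], q \<leftarrow> [0..<n]]
    @ [enc (dret A p p' a q). p \<leftarrow> [0..<n], p' \<leftarrow> [0..<n], a \<leftarrow> [0..<m], q \<leftarrow> [0..<n]]
    @ [enc (kappa A p). p \<leftarrow> [0..<n]])"

definition iota_index :: "nat \<Rightarrow> nat" where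
  "iota_index p = 1 + p"

definition call_index :: "nat \<Rightarrow> nat \<Rightarrow> nat \<Rightarrow> nat \<Rightarrow> nat \<Rightarrow> nat" where
  "call_index m n p a q = 1 + n + ((p * m + a) * n + q)"

definition int_index :: "nat \<Rightarrow> nat \<Rightarrow> nat \<Rightarrow> nat \<Rightarrow> nat \<Rightarrow> nat" where
  "int_index m n p a q = 1 + n + n * m * n + ((p * m + a) * n + q)"

definition ret_index :: "nat \<Rightarrow> nat \<Rightarrow> nat \<Rightarrow> nat \<Rightarrow> nat \<Rightarrow> nat \<Rightarrow> nat" where
  "ret_index m n p p' a q = 1 + n + 2 * (n * m * n) + (((p * n + p') * m + a) * n + q)"

definition kappa_index :: "nat \<Rightarrow> nat \<Rightarrow> nat \<Rightarrow> nat" where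
  "kappa_index m n p = 1 + n + 2 * (n * m * n) + n * (n * m * n) + p"

lemma code_wnwa_eq: "code_wnwa m enc A = list_encode (wnwa_table m enc A)"
  by (simp add: code_wnwa_def wnwa_table_def Let_def)

context
  fixes m :: nat and enc :: "'k \<Rightarrow> nat" and A :: "'k wnwa"
begin

lemma wnwa_table_unfold: "wnwa_table m enc A = [nst A] @ map (\<lambda>p. enc (iota A p)) [0..<nst A]
  @ concat (map (\<lambda>p. concat (map (\<lambda>a. map (\<lambda>q. enc (dcall A p a q)) [0..<nst A]) [0..<m])) [0..<nst A])
  @ concat (map (\<lambda>p. concat (map (\<lambda>a. map (\<lambda>q. enc (dint A p a q)) [0..<nst A]) [0..<m])) [0..<nst A])
  @ concat (map (\<lambda>p. concat (map (\<lambda>p'. concat (map (\<lambda>a. map (\<lambda>q. enc (dret A p p' a q))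
      [0..<nst A]) [0..<m])) [0..<nst A])) [0..<nst A])
  @ map (\<lambda>p. enc (kappa A p)) [0..<nst A]"
  by (simp add: wnwa_table_def Let_def concat_map_singleton)

lemma length_wnwa_table: "length (wnwa_table m enc A) =
    1 + nst A + nst A * m * nst A + nst A * m * nst A + nst A * (nst A * m * nst A) + nst A"
  unfolding wnwa_table_unfold by (simp add: length_concat comp_def sum_list_triv)

lemma wnwa_table_nst: "wnwa_table m enc A ! 0 = nst A"
  unfolding wnwa_table_unfold by simp

lemma wnwa_table_iota: "p < nst A \<Longrightarrow> wnwa_table m enc A ! iota_index p = enc (iota A p)"
  unfolding wnwa_table_unfold iota_index_def by (simp add: nth_append)

lemma wnwa_table_call:
  assumes "p < nst A" "a < m" "q < nst A"
  shows "wnwa_table m enc A ! call_index m (nst A) p a q = enc (dcall A p a q)"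
proof -
  have "(p * m + a) * nst A + q < nst A * m * nst A"
    using assms by (intro mult_add_less_mult) auto
  then show ?thesis
    unfolding wnwa_table_unfold call_index_def
    using nth_concat_map3[OF assms, of "\<lambda>p a q. enc (dcall A p a q)"]
    by (simp add: nth_append length_concat_map3)
qed

lemma wnwa_table_int:
  assumes "p < nst A" "a < m" "q < nst A"
  shows "wnwa_table m enc A ! int_index m (nst A) p a q = enc (dint A p a q)"
proof -
  have "(p * m + a) * nst A + q < nst A * m * nst A"
    using assms by (intro mult_add_less_mult) auto
  then show ?thesis
    unfolding wnwa_table_unfold int_index_def
    using nth_concat_map3[OF assms, of "\<lambda>p a q. enc (dint A p a q)"]
    by (simp add: nth_append length_concat_map3)
qed

lemma wnwa_table_ret:
  assumes "p < nst A" "p' < nst A" "a < m" "q < nst A"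
  shows "wnwa_table m enc A ! ret_index m (nst A) p p' a q = enc (dret A p p' a q)"
proof -
  let ?n = "nst A"
  let ?R = "concat (map (\<lambda>p. concat (map (\<lambda>p'. concat (map (\<lambda>a. map (\<lambda>q. enc (dret A p p' a q))
      [0..<?n]) [0..<m])) [0..<?n])) [0..<?n])"
  have len: "\<forall>p\<in>set [0..<?n]. length (concat (map (\<lambda>p'. concat (map (\<lambda>a. map (\<lambda>q. enc (dret A p p' a q))
      [0..<?n]) [0..<m])) [0..<?n])) = ?n * m * ?n"
    by (simp add: length_concat comp_def sum_list_triv)
  have inner: "(p' * m + a) * ?n + q < ?n * m * ?n"
    using assms by (intro mult_add_less_mult) auto
  have split: "((p * ?n + p') * m + a) * ?n + q = p * (?n * m * ?n) + ((p' * m + a) * ?n + q)"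
    by (simp add: algebra_simps)
  have "?R ! (((p * ?n + p') * m + a) * ?n + q) = enc (dret A p p' a q)"
    unfolding split using nth_concat_map_uniform[OF len, of p "(p' * m + a) * ?n + q"] inner assms
      nth_concat_map3[OF assms(2-4), of "\<lambda>p' a q. enc (dret A p p' a q)"]
    by simp
  moreover have "((p * ?n + p') * m + a) * ?n + q < ?n * (?n * m * ?n)"
    unfolding split using mult_add_less_mult[OF assms(1) inner] by (simp add: mult.commute)
  moreover have "length ?R = ?n * (?n * m * ?n)"
    by (simp add: length_concat comp_def sum_list_triv)
  ultimately show ?thesis
    unfolding wnwa_table_unfold ret_index_def
    by (simp add: nth_append length_concat_map3)
qed

lemma wnwa_table_kappa:
  "p < nst A \<Longrightarrow> wnwa_table m enc A ! kappa_index m (nst A) p = enc (kappa A p)"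
  unfolding wnwa_table_unfold kappa_index_def
  by (simp add: nth_append length_concat_map3 length_concat comp_def sum_list_triv)

lemma wnwa_table_entries:
  assumes "0 < i" "i < length (wnwa_table m enc A)"
  shows "wnwa_table m enc A ! i \<in> range enc"
proof -
  have "set (tl (wnwa_table m enc A)) \<subseteq> range enc"
    unfolding wnwa_table_unfold by auto
  then show ?thesis
    using assms nth_mem[of "i - 1" "tl (wnwa_table m enc A)"] by (auto simp: nth_tl)
qed

end

section \<open>The decision procedure\<close>

text \<open>A candidate witness is a number coding the list \<open>[w, ps, qs]\<close> of the codes of a word,
  a partner list and a run; positions \<open>j\<close> of the word are 1-based.\<close>

definition cand_word :: "nat \<Rightarrow> nat" where "cand_word t = code_nth t 0"
definition cand_partners :: "nat \<Rightarrow> nat" where "cand_partners t = code_nth t 1"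
definition cand_run :: "nat \<Rightarrow> nat" where "cand_run t = code_nth t 2"
definition cand_length :: "nat \<Rightarrow> nat" where "cand_length t = code_length (cand_word t)"
definition cand_letter :: "nat \<Rightarrow> nat \<Rightarrow> nat" where "cand_letter t j = code_nth (cand_word t) (j - 1)"
definition cand_partner :: "nat \<Rightarrow> nat \<Rightarrow> nat" where "cand_partner t j = code_nth (cand_partners t) (j - 1)"
definition cand_state :: "nat \<Rightarrow> nat \<Rightarrow> nat" where "cand_state t k = code_nth (cand_run t) k"

definition code_nst :: "nat \<Rightarrow> nat" where "code_nst c = code_nth c 0"

text \<open>Lookups outside the table return \<open>c0\<close>, which will be the code of \<open>0\<close>: every lookup is
  then the code of a semiring element, the precondition of the multiplication program.\<close>

definition table_entry :: "nat \<Rightarrow> nat \<Rightarrow> nat \<Rightarrow> nat" where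
  "table_entry c0 c i = (if 0 < i \<and> i < code_length c then code_nth c i else c0)"

definition weight_index :: "nat \<Rightarrow> nat \<Rightarrow> nat \<Rightarrow> nat \<Rightarrow> nat" where
  "weight_index m c t j =
     (let n = code_nst c; p = cand_state t (j - 1); q = cand_state t j; a = cand_letter t j;
          i = cand_partner t j
      in if j < i then call_index m n p a q
         else if 0 < i then ret_index m n p (cand_state t (i - 1)) a q
         else int_index m n p a q)"

definition mult_code :: "('k::comm_semiring_1 \<Rightarrow> nat) \<Rightarrow> nat \<Rightarrow> nat \<Rightarrow> nat" where
  "mult_code enc x y = enc (inv enc x * inv enc y)"

primrec prefix_weight_code :: "('k::comm_semiring_1 \<Rightarrow> nat) \<Rightarrow> nat \<Rightarrow> nat \<Rightarrow> nat \<Rightarrow> nat \<Rightarrow> nat \<Rightarrow> nat" where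
  "prefix_weight_code enc m c0 c t 0 = table_entry c0 c (iota_index (cand_state t 0))"
| "prefix_weight_code enc m c0 c t (Suc k) =
     mult_code enc (prefix_weight_code enc m c0 c t k) (table_entry c0 c (weight_index m c t (Suc k)))"

definition weight_code :: "('k::comm_semiring_1 \<Rightarrow> nat) \<Rightarrow> nat \<Rightarrow> nat \<Rightarrow> nat \<Rightarrow> nat \<Rightarrow> nat" where
  "weight_code enc m c0 c t = mult_code enc (prefix_weight_code enc m c0 c t (cand_length t))
     (table_entry c0 c (kappa_index m (code_nst c) (cand_state t (cand_length t))))"

definition valid_candidate :: "nat \<Rightarrow> nat \<Rightarrow> nat \<Rightarrow> bool" where
  "valid_candidate m c t \<longleftrightarrow> 0 < cand_length t \<and> code_length (cand_partners t) = cand_length t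
     \<and> code_length (cand_run t) = Suc (cand_length t)
     \<and> (\<forall>j < cand_length t. code_nth (cand_word t) j < m)
     \<and> (\<forall>k < Suc (cand_length t). cand_state t k < code_nst c)
     \<and> partners_wf (cand_length t) (code_nth (cand_partners t))"

definition witness_candidate :: "('k::comm_semiring_1 \<Rightarrow> nat) \<Rightarrow> nat \<Rightarrow> nat \<Rightarrow> nat \<Rightarrow> nat \<Rightarrow> bool" where
  "witness_candidate enc m c0 c t \<longleftrightarrow> valid_candidate m c t \<and> weight_code enc m c0 c t \<noteq> c0"

text \<open>Every candidate for a word of length at most \<open>short_run_bound n\<close> is coded below this bound.\<close>

definition candidate_bound :: "nat \<Rightarrow> nat \<Rightarrow> nat" where
  "candidate_bound m c = (let B = short_run_bound (code_nst c); X = m + code_nst c + B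
     in Suc (list_code_bound 3 (X + list_code_bound (Suc B) X)))"

definition decide_zero :: "('k::comm_semiring_1 \<Rightarrow> nat) \<Rightarrow> nat \<Rightarrow> nat \<Rightarrow> nat \<Rightarrow> nat" where
  "decide_zero enc m c0 c = (if \<exists>t < candidate_bound m c. witness_candidate enc m c0 c t then 0 else 1)"

lemma mult_code_enc: "inj enc \<Longrightarrow> mult_code enc (enc a) (enc b) = enc (a * b)"
  by (simp add: mult_code_def)

context
  fixes m :: nat and enc :: "'k::comm_semiring_1 \<Rightarrow> nat" and A :: "'k wnwa"
begin

lemma code_nth_code_wnwa:
  "i < length (wnwa_table m enc A) \<Longrightarrow> code_nth (code_wnwa m enc A) i = wnwa_table m enc A ! i"
  by (simp add: code_wnwa_eq code_nth_list_encode)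

lemma code_nst_code_wnwa: "code_nst (code_wnwa m enc A) = nst A"
  using code_nth_code_wnwa[of 0] by (simp add: code_nst_def wnwa_table_nst length_wnwa_table)

lemma table_entry_code_wnwa:
  "0 < i \<Longrightarrow> i < length (wnwa_table m enc A) \<Longrightarrow> table_entry c0 (code_wnwa m enc A) i = wnwa_table m enc A ! i"
  by (simp add: table_entry_def code_wnwa_eq code_length_list_encode code_nth_list_encode)

lemma table_entry_iota:
  "p < nst A \<Longrightarrow> table_entry c0 (code_wnwa m enc A) (iota_index p) = enc (iota A p)"
  using wnwa_table_iota[where m=m and enc=enc and A=A and p=p] by (simp add: table_entry_code_wnwa length_wnwa_table iota_index_def)

lemma table_entry_call:
  assumes "p < nst A" "a < m" "q < nst A"
  shows "table_entry c0 (code_wnwa m enc A) (call_index m (nst A) p a q) = enc (dcall A p a q)"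
  using index3_less[OF assms] wnwa_table_call[OF assms]
  by (simp add: table_entry_code_wnwa length_wnwa_table call_index_def)

lemma table_entry_int:
  assumes "p < nst A" "a < m" "q < nst A"
  shows "table_entry c0 (code_wnwa m enc A) (int_index m (nst A) p a q) = enc (dint A p a q)"
  using index3_less[OF assms] wnwa_table_int[OF assms]
  by (simp add: table_entry_code_wnwa length_wnwa_table int_index_def)

lemma table_entry_ret:
  assumes "p < nst A" "p' < nst A" "a < m" "q < nst A"
  shows "table_entry c0 (code_wnwa m enc A) (ret_index m (nst A) p p' a q) = enc (dret A p p' a q)"
proof -
  have "p * nst A + p' < nst A * nst A"
    using assms by (intro mult_add_less_mult) auto
  then have "(p * nst A + p') * m + a < nst A * nst A * m"
    using assms by (intro mult_add_less_mult)
  then have "((p * nst A + p') * m + a) * nst A + q < nst A * nst A * m * nst A"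
    using assms by (intro mult_add_less_mult)
  then have "((p * nst A + p') * m + a) * nst A + q < nst A * (nst A * m * nst A)"
    by (simp add: ac_simps)
  then show ?thesis
    using assms wnwa_table_ret[OF assms] by (simp add: table_entry_code_wnwa length_wnwa_table ret_index_def)
qed

lemma table_entry_kappa:
  "p < nst A \<Longrightarrow> table_entry c0 (code_wnwa m enc A) (kappa_index m (nst A) p) = enc (kappa A p)"
  using wnwa_table_kappa[where m=m and enc=enc and A=A and p=p]
  by (simp add: table_entry_code_wnwa length_wnwa_table kappa_index_def)

lemma table_entry_range: "c0 \<in> range enc \<Longrightarrow> table_entry c0 (code_wnwa m enc A) i \<in> range enc"
  using wnwa_table_entries by (auto simp: table_entry_def code_wnwa_eq code_length_list_encode code_nth_list_encode)

end

context
  fixes m :: nat and enc :: "'k::comm_semiring_1 \<Rightarrow> nat" and A :: "'k wnwa"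
    and t :: nat and w ps qs :: "nat list"
  assumes word: "cand_word t = list_encode w" and partners: "cand_partners t = list_encode ps"
    and run: "cand_run t = list_encode qs"
begin

lemma valid_candidate_code_wnwa_iff:
  "valid_candidate m (code_wnwa m enc A) t \<longleftrightarrow> w \<noteq> [] \<and> length ps = length w \<and> length qs = Suc (length w)
     \<and> set w \<subseteq> {..<m} \<and> set qs \<subseteq> {..<nst A} \<and> partners_wf (length w) ((!) ps)"
proof -
  have len: "cand_length t = length w"
    by (simp add: cand_length_def word code_length_list_encode)
  have "(\<forall>j < length w. code_nth (list_encode w) j < m) \<longleftrightarrow> set w \<subseteq> {..<m}"
    using all_set_conv_all_nth[of w "\<lambda>x. x < m"] by (auto simp: code_nth_list_encode)
  moreover have "(\<forall>k < length qs. cand_state t k < nst A) \<longleftrightarrow> set qs \<subseteq> {..<nst A}"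
    using all_set_conv_all_nth[of qs "\<lambda>x. x < nst A"] by (auto simp: cand_state_def run code_nth_list_encode)
  moreover have "length ps = length w \<Longrightarrow>
      partners_wf (length w) (code_nth (list_encode ps)) \<longleftrightarrow> partners_wf (length w) ((!) ps)"
    by (auto simp: partners_wf_def code_nth_list_encode)
  ultimately show ?thesis
    unfolding valid_candidate_def len code_nst_code_wnwa
    by (auto simp: word partners run code_length_list_encode)
qed

lemma valid_candidate_state:
  assumes "valid_candidate m (code_wnwa m enc A) t" "k \<le> length w"
  shows "cand_state t k = qs ! k" "qs ! k < nst A"
proof -
  have "k < length qs" "set qs \<subseteq> {..<nst A}"
    using assms[unfolded valid_candidate_code_wnwa_iff] by auto
  then show "cand_state t k = qs ! k" "qs ! k < nst A"
    by (auto simp: cand_state_def run code_nth_list_encode dest: nth_mem)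
qed

lemma table_entry_weight_index:
  assumes valid: "valid_candidate m (code_wnwa m enc A) t" and j: "1 \<le> j" "j \<le> length w"
  shows "table_entry c0 (code_wnwa m enc A) (weight_index m (code_wnwa m enc A) t j)
    = enc (pos_weight A w (partner_nesting ps) qs j)"
proof -
  note facts = valid[unfolded valid_candidate_code_wnwa_iff]
  have wf: "partners_wf (length ps) ((!) ps)" and jps: "j \<le> length ps"
    using facts j by auto
  note state = valid_candidate_state[OF valid]
  have "j - 1 < length w" "set w \<subseteq> {..<m}"
    using facts j by auto
  then have letter: "cand_letter t j = w ! (j - 1)" "w ! (j - 1) < m"
    by (auto simp: cand_letter_def word code_nth_list_encode dest: nth_mem)
  have partner: "cand_partner t j = ps ! (j - 1)"
    using jps j by (simp add: cand_partner_def partners code_nth_list_encode)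
  let ?p = "qs ! (j - 1)" and ?q = "qs ! j" and ?a = "w ! (j - 1)" and ?i = "ps ! (j - 1)"
  have states: "cand_state t (j - 1) = ?p" "?p < nst A" "cand_state t j = ?q" "?q < nst A"
    using state[of "j - 1"] state[of j] j by auto
  have "?i \<noteq> j"
    using partners_wfD(2)[OF wf, of "j - 1"] j jps by auto
  then consider (call) "j < ?i" | (return) "0 < ?i" "?i < j" | (internal) "?i = 0"
    by linarith
  then show ?thesis
  proof cases
    case call
    then have "pos_weight A w (partner_nesting ps) qs j = dcall A ?p ?a ?q"
      using partner_nesting_call[OF j(1) jps] by (simp add: pos_weight_def)
    then show ?thesis
      using call table_entry_call[where p="?p" and a="?a" and q="?q"] states letter
      by (simp add: weight_index_def code_nst_code_wnwa partner)
  next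
    case return
    then have "pos_weight A w (partner_nesting ps) qs j = dret A ?p (qs ! (?i - 1)) ?a ?q"
      using partner_nesting_call[OF j(1) jps] partner_nesting_return_iff[OF wf j(1) jps]
        The_call_partner_nesting[OF wf j(1) jps] by (simp add: pos_weight_def)
    moreover have "cand_state t (?i - 1) = qs ! (?i - 1)" "qs ! (?i - 1) < nst A"
      using state[of "?i - 1"] return j by auto
    ultimately show ?thesis
      using return table_entry_ret[where p="?p" and p'="qs ! (?i - 1)" and a="?a" and q="?q"] states letter
      by (simp add: weight_index_def code_nst_code_wnwa partner)
  next
    case internal
    then have "pos_weight A w (partner_nesting ps) qs j = dint A ?p ?a ?q"
      using partner_nesting_call[OF j(1) jps] partner_nesting_return_iff[OF wf j(1) jps]
      by (simp add: pos_weight_def)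
    then show ?thesis
      using internal table_entry_int[where p="?p" and a="?a" and q="?q"] states letter
      by (simp add: weight_index_def code_nst_code_wnwa partner)
  qed
qed

lemma prefix_weight_code_eq:
  assumes "inj enc" and valid: "valid_candidate m (code_wnwa m enc A) t" and "k \<le> length w"
  shows "prefix_weight_code enc m c0 (code_wnwa m enc A) t k
    = enc (iota A (qs ! 0) * (\<Prod>j\<in>{1..k}. pos_weight A w (partner_nesting ps) qs j))"
  using assms(3)
proof (induction k)
  case 0
  then show ?case
    using valid_candidate_state[OF valid, of 0] by (simp add: table_entry_iota)
next
  case (Suc k)
  have "{1..Suc k} = insert (Suc k) {1..k}"
    by auto
  then show ?case
    using Suc table_entry_weight_index[OF valid, of "Suc k"]
    by (simp add: mult_code_enc[OF assms(1)] ac_simps)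
qed

lemma weight_code_eq:
  assumes "inj enc" and valid: "valid_candidate m (code_wnwa m enc A) t"
  shows "weight_code enc m c0 (code_wnwa m enc A) t = enc (run_weight A w (partner_nesting ps) qs)"
proof -
  have len: "cand_length t = length w"
    by (simp add: cand_length_def word code_length_list_encode)
  show ?thesis
    using prefix_weight_code_eq[OF assms order.refl] valid_candidate_state[OF valid order.refl]
    by (simp add: weight_code_def len code_nst_code_wnwa table_entry_kappa mult_code_enc[OF assms(1)]
        run_weight_def)
qed

end

lemma witness_candidate_sound:
  fixes enc :: "'k::comm_semiring_1 \<Rightarrow> nat"
  assumes "inj enc" "zero_sum_free TYPE('k)"
    and witness: "witness_candidate enc m (enc 0) (code_wnwa m enc A) t"
  shows "\<exists>nw\<in>NW m. behaviour A nw \<noteq> 0"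
proof -
  define w ps qs where "w = list_decode (cand_word t)" and "ps = list_decode (cand_partners t)"
    and "qs = list_decode (cand_run t)"
  have codes: "cand_word t = list_encode w" "cand_partners t = list_encode ps" "cand_run t = list_encode qs"
    by (simp_all add: w_def ps_def qs_def)
  have valid: "valid_candidate m (code_wnwa m enc A) t"
    using witness by (simp add: witness_candidate_def)
  note facts = valid[unfolded valid_candidate_code_wnwa_iff[OF codes]]
  have "run_weight A w (partner_nesting ps) qs \<noteq> 0"
    using witness weight_code_eq[OF codes assms(1) valid] by (auto simp: witness_candidate_def)
  moreover have "qs \<in> runs A (length w)"
    using facts by (simp add: runs_def)
  moreover have "(w, partner_nesting ps) \<in> NW m"
    using facts nesting_partner_nesting[of ps] by (auto simp: NW_def)
  ultimately show ?thesis
    using behaviour_neq_zero_iff[OF assms(2)] by blast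
qed

lemma candidate_less_candidate_bound:
  fixes enc :: "'k::comm_semiring_1 \<Rightarrow> nat"
  assumes "set w \<subseteq> {..<m}" "\<forall>x\<in>set ps. x \<le> length w" "length ps = length w"
    "set qs \<subseteq> {..<nst A}" "length qs = Suc (length w)" "length w \<le> short_run_bound (nst A)"
  shows "list_encode [list_encode w, list_encode ps, list_encode qs] < candidate_bound m (code_wnwa m enc A)"
proof -
  let ?B = "short_run_bound (nst A)"
  let ?X = "m + nst A + ?B"
  let ?Y = "list_code_bound (Suc ?B) ?X"
  have "list_encode w \<le> ?Y"
    using assms by (intro list_encode_le_list_code_bound) auto
  moreover have "list_encode ps \<le> ?Y"
    using assms by (intro list_encode_le_list_code_bound) auto
  moreover have "list_encode qs \<le> ?Y"
    using assms by (intro list_encode_le_list_code_bound) auto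
  ultimately
  have "list_encode [list_encode w, list_encode ps, list_encode qs] \<le> list_code_bound 3 (?X + ?Y)"
    by (intro list_encode_le_list_code_bound) auto
  then show ?thesis
    by (simp add: candidate_bound_def code_nst_code_wnwa Let_def del: list_encode.simps)
qed

lemma witness_candidate_complete:
  fixes enc :: "'k::comm_semiring_1 \<Rightarrow> nat"
  assumes "inj enc" and NW: "(w, \<nu>) \<in> NW m" and run: "qs \<in> runs A (length w)"
    and nonzero: "run_weight A w \<nu> qs \<noteq> 0" and short: "length w \<le> short_run_bound (nst A)"
  shows "\<exists>t < candidate_bound m (code_wnwa m enc A). witness_candidate enc m (enc 0) (code_wnwa m enc A) t"
proof -
  have nesting: "nesting (length w) \<nu>"
    using NW by (simp add: NW_def)
  define ps where "ps = partner_list \<nu> (length w)"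
  have ps: "length ps = length w" "partners_wf (length w) ((!) ps)" "partner_nesting ps = \<nu>"
    "\<forall>x\<in>set ps. x \<le> length w"
    using partners_wf_partner_list[OF nesting] partner_nesting_partner_list[OF nesting]
      partner_le[OF nesting] by (auto simp: ps_def partner_list_def)
  define t where "t = list_encode [list_encode w, list_encode ps, list_encode qs]"
  have codes: "cand_word t = list_encode w" "cand_partners t = list_encode ps" "cand_run t = list_encode qs"
    by (simp_all add: t_def cand_word_def cand_partners_def cand_run_def code_nth_list_encode
        del: list_encode.simps)
  have valid: "valid_candidate m (code_wnwa m enc A) t"
    unfolding valid_candidate_code_wnwa_iff[OF codes] using NW run ps by (auto simp: NW_def runs_def)
  have "weight_code enc m (enc 0) (code_wnwa m enc A) t \<noteq> enc 0"
    using weight_code_eq[OF codes assms(1) valid] nonzero ps(3) inj_eq[OF assms(1)] by simp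
  moreover have "t < candidate_bound m (code_wnwa m enc A)"
    unfolding t_def using NW run ps short by (intro candidate_less_candidate_bound) (auto simp: NW_def runs_def)
  ultimately show ?thesis
    using valid by (auto simp: witness_candidate_def)
qed

theorem decide_zero_code_wnwa:
  fixes enc :: "'k::comm_semiring_1 \<Rightarrow> nat"
  assumes "inj enc" "zero_sum_free TYPE('k)"
  shows "decide_zero enc m (enc 0) (code_wnwa m enc A) = (if \<forall>nw \<in> NW m. behaviour A nw = 0 then 1 else 0)"
proof -
  have "(\<exists>t < candidate_bound m (code_wnwa m enc A). witness_candidate enc m (enc 0) (code_wnwa m enc A) t)
      \<longleftrightarrow> (\<exists>nw\<in>NW m. behaviour A nw \<noteq> 0)"
  proof
    assume "\<exists>nw\<in>NW m. behaviour A nw \<noteq> 0"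
    then obtain w \<nu> qs where "(w, \<nu>) \<in> NW m" "qs \<in> runs A (length w)" "run_weight A w \<nu> qs \<noteq> 0"
      using behaviour_neq_zero_iff[OF assms(2)] by force
    then obtain w' \<nu>' qs' where "(w', \<nu>') \<in> NW m" "qs' \<in> runs A (length w')"
      "run_weight A w' \<nu>' qs' \<noteq> 0" "length w' \<le> short_run_bound (nst A)"
      by (rule nonzero_run_short)
    then show "\<exists>t < candidate_bound m (code_wnwa m enc A). witness_candidate enc m (enc 0) (code_wnwa m enc A) t"
      by (rule witness_candidate_complete[OF assms(1)])
  qed (use witness_candidate_sound[OF assms] in blast)
  then show ?thesis
    by (auto simp: decide_zero_def)
qed

lemma rec_computable_cand [rec_computable_intros]:
  "rec_computable k D f \<Longrightarrow> rec_computable k D (\<lambda>xs. cand_word (f xs))"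
  "rec_computable k D f \<Longrightarrow> rec_computable k D (\<lambda>xs. cand_partners (f xs))"
  "rec_computable k D f \<Longrightarrow> rec_computable k D (\<lambda>xs. cand_run (f xs))"
  "rec_computable k D f \<Longrightarrow> rec_computable k D (\<lambda>xs. code_nst (f xs))"
  unfolding cand_word_def cand_partners_def cand_run_def code_nst_def by (auto intro!: rec_computable_intros)

lemma rec_computable_cand_length [rec_computable_intros]:
  "rec_computable k D f \<Longrightarrow> rec_computable k D (\<lambda>xs. cand_length (f xs))"
  unfolding cand_length_def by (intro rec_computable_intros)

lemma rec_computable_cand_entries [rec_computable_intros]:
  "rec_computable k D f \<Longrightarrow> rec_computable k D g \<Longrightarrow> rec_computable k D (\<lambda>xs. cand_letter (f xs) (g xs))"
  "rec_computable k D f \<Longrightarrow> rec_computable k D g \<Longrightarrow> rec_computable k D (\<lambda>xs. cand_partner (f xs) (g xs))"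
  "rec_computable k D f \<Longrightarrow> rec_computable k D g \<Longrightarrow> rec_computable k D (\<lambda>xs. cand_state (f xs) (g xs))"
  "rec_computable k D f \<Longrightarrow> rec_computable k D g \<Longrightarrow> rec_computable k D (\<lambda>xs. table_entry c0 (f xs) (g xs))"
  unfolding cand_letter_def cand_partner_def cand_state_def table_entry_def
  by (auto intro!: rec_computable_intros)

lemma rec_computable_weight_index [rec_computable_intros]:
  "rec_computable k D f \<Longrightarrow> rec_computable k D g \<Longrightarrow> rec_computable k D h \<Longrightarrow>
    rec_computable k D (\<lambda>xs. weight_index m (f xs) (g xs) (h xs))"
  unfolding weight_index_def Let_def call_index_def ret_index_def int_index_def
  by (intro rec_computable_intros)

lemma rec_computable_partners_wf [rec_computable_intros]:
  assumes "rec_computable k D f" "rec_computable k D g"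
  shows "rec_computable k D (\<lambda>xs. of_bool (partners_wf (f xs) (code_nth (g xs))))"
proof (rule rec_computable_compose2[where F="\<lambda>L c. of_bool (partners_wf L (code_nth c))", OF _ assms])
  have crossing: "rec_computable (Suc 2) (\<lambda>_. True) (\<lambda>ys. of_bool (\<forall>l<ys ! 1. ys ! 0 < l \<longrightarrow>
      Suc (ys ! 0) < code_nth (ys ! 2) (ys ! 0) \<longrightarrow> Suc l < code_nth (ys ! 2) l \<longrightarrow>
      code_nth (ys ! 2) l < code_nth (ys ! 2) (ys ! 0) \<or> code_nth (ys ! 2) (ys ! 0) < Suc l))"
    by (rule rec_computable_all[where G="\<lambda>zs. of_bool (zs ! 1 < zs ! 0 \<longrightarrow>
        Suc (zs ! 1) < code_nth (zs ! 3) (zs ! 1) \<longrightarrow> Suc (zs ! 0) < code_nth (zs ! 3) (zs ! 0) \<longrightarrow>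
        code_nth (zs ! 3) (zs ! 0) < code_nth (zs ! 3) (zs ! 1) \<or> code_nth (zs ! 3) (zs ! 1) < Suc (zs ! 0))"])
       (auto intro!: rec_computable_intros)
  define G :: "nat list \<Rightarrow> nat" where "G ys = of_bool (code_nth (ys ! 2) (ys ! 0) \<le> ys ! 1 \<and>
      code_nth (ys ! 2) (ys ! 0) \<noteq> Suc (ys ! 0) \<and>
      (code_nth (ys ! 2) (ys ! 0) \<noteq> 0 \<longrightarrow> code_nth (ys ! 2) (code_nth (ys ! 2) (ys ! 0) - 1) = Suc (ys ! 0)) \<and>
      (\<forall>l<ys ! 1. ys ! 0 < l \<longrightarrow> Suc (ys ! 0) < code_nth (ys ! 2) (ys ! 0) \<longrightarrow>
        Suc l < code_nth (ys ! 2) l \<longrightarrow> code_nth (ys ! 2) l < code_nth (ys ! 2) (ys ! 0) \<or>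
        code_nth (ys ! 2) (ys ! 0) < Suc l))" for ys
  have "rec_computable (Suc 2) (\<lambda>_. True) G"
    unfolding G_def using crossing by (intro rec_computable_intros) auto
  then show "rec_computable 2 (\<lambda>_. True) (\<lambda>ys. of_bool (partners_wf (ys ! 0) (code_nth (ys ! 1))))"
    unfolding partners_wf_def by (rule rec_computable_all) (auto intro!: rec_computable_intros simp: G_def)
qed

lemma rec_computable_valid_candidate [rec_computable_intros]:
  "rec_computable k D f \<Longrightarrow> rec_computable k D g \<Longrightarrow>
    rec_computable k D (\<lambda>xs. of_bool (valid_candidate m (f xs) (g xs)))"
proof (rule rec_computable_compose2[where F="\<lambda>c t. of_bool (valid_candidate m c t)"])
  have letters: "rec_computable 2 (\<lambda>_. True)
      (\<lambda>ys. of_bool (\<forall>j < cand_length (ys ! 1). code_nth (cand_word (ys ! 1)) j < m))"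
    by (rule rec_computable_all[where G="\<lambda>zs. of_bool (code_nth (cand_word (zs ! 2)) (zs ! 0) < m)"])
       (auto intro!: rec_computable_intros)
  have states: "rec_computable 2 (\<lambda>_. True)
      (\<lambda>ys. of_bool (\<forall>k < Suc (cand_length (ys ! 1)). cand_state (ys ! 1) k < code_nst (ys ! 0)))"
    by (rule rec_computable_all[where G="\<lambda>zs. of_bool (cand_state (zs ! 2) (zs ! 0) < code_nst (zs ! 1))"])
       (auto intro!: rec_computable_intros)
  show "rec_computable 2 (\<lambda>_. True) (\<lambda>ys. of_bool (valid_candidate m (ys ! 0) (ys ! 1)))"
    unfolding valid_candidate_def using letters states by (intro rec_computable_intros) auto
qed

lemma rec_computable_mult_code:
  assumes "computable_semiring enc" and f: "rec_computable k D f" and g: "rec_computable k D g"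
    and coded: "\<And>xs. length xs = k \<Longrightarrow> D xs \<Longrightarrow> f xs \<in> range enc \<and> g xs \<in> range enc"
  shows "rec_computable k D (\<lambda>xs. mult_code enc (f xs) (g xs))"
proof -
  obtain p where p: "\<forall>a b. eval p [enc a, enc b] (enc (a * b))" and inj: "inj enc"
    using assms(1) unfolding computable_semiring_def by blast
  have "eval p ys (mult_code enc (ys ! 0) (ys ! 1))"
    if "length ys = 2" "ys ! 0 \<in> range enc \<and> ys ! 1 \<in> range enc" for ys
  proof -
    have "ys = [ys ! 0, ys ! 1]"
      using that(1) by (intro nth_equalityI) (auto simp: less_2_cases_iff)
    with that(2) obtain a b where "ys = [enc a, enc b]"
      by auto
    then show ?thesis
      using p by (simp add: mult_code_def inv_f_f[OF inj])
  qed
  then have "rec_computable 2 (\<lambda>ys. ys ! 0 \<in> range enc \<and> ys ! 1 \<in> range enc) (\<lambda>ys. mult_code enc (ys ! 0) (ys ! 1))"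
    unfolding rec_computable_def by blast
  then have "rec_computable k D (\<lambda>xs. (\<lambda>ys. mult_code enc (ys ! 0) (ys ! 1)) (map (\<lambda>h. h xs) [f, g]))"
    by (rule rec_computable_compose) (use f g coded in auto)
  then show ?thesis
    by simp
qed

definition entries_coded :: "('k \<Rightarrow> nat) \<Rightarrow> nat \<Rightarrow> nat \<Rightarrow> bool" where
  "entries_coded enc c0 c \<longleftrightarrow> (\<forall>i. table_entry c0 c i \<in> range enc)"

lemma prim_rec_prefix_weight_code: "length xs = 2 \<Longrightarrow>
  prim_rec (\<lambda>xs. table_entry c0 (xs ! 1) (iota_index (cand_state (xs ! 0) 0)))
    (\<lambda>zs. mult_code enc (zs ! 0) (table_entry c0 (zs ! 3) (weight_index m (zs ! 3) (zs ! 2) (Suc (zs ! 1))))) n xs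
  = prefix_weight_code enc m c0 (xs ! 1) (xs ! 0) n"
  by (induction n) (auto simp: numeral_3_eq_3 numeral_2_eq_2)

lemma rec_computable_weight_code:
  assumes "computable_semiring enc"
  shows "rec_computable 2 (\<lambda>ys. entries_coded enc c0 (ys ! 1)) (\<lambda>ys. weight_code enc m c0 (ys ! 1) (ys ! 0))"
proof -
  let ?D = "\<lambda>ys. entries_coded enc c0 (ys ! 1)"
  let ?b = "\<lambda>xs. table_entry c0 (xs ! 1) (iota_index (cand_state (xs ! 0) 0))"
  let ?g = "\<lambda>zs. mult_code enc (zs ! 0) (table_entry c0 (zs ! 3) (weight_index m (zs ! 3) (zs ! 2) (Suc (zs ! 1))))"
  have step: "rec_computable (Suc (Suc 2)) (\<lambda>zs. zs ! 0 \<in> range enc \<and> entries_coded enc c0 (zs ! 3)) ?g"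
    by (rule rec_computable_mult_code[OF assms]) (auto intro!: rec_computable_intros simp: entries_coded_def)
  have prefix: "rec_computable 2 ?D (\<lambda>xs. prim_rec ?b ?g (cand_length (xs ! 0)) xs)"
  proof (rule rec_computable_prim_rec[OF _ step])
    fix n :: nat and xs :: "nat list"
    assume "length xs = 2" "entries_coded enc c0 (xs ! 1)"
    then show "(prim_rec ?b ?g n xs # n # xs) ! 0 \<in> range enc \<and> entries_coded enc c0 ((prim_rec ?b ?g n xs # n # xs) ! 3)"
      by (cases n) (auto simp: prim_rec_prefix_weight_code numeral_3_eq_3 entries_coded_def mult_code_def)
  qed (auto intro!: rec_computable_intros simp: iota_index_def)
  have "rec_computable 2 ?D (\<lambda>xs. mult_code enc (prim_rec ?b ?g (cand_length (xs ! 0)) xs)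
      (table_entry c0 (xs ! 1) (kappa_index m (code_nst (xs ! 1)) (cand_state (xs ! 0) (cand_length (xs ! 0))))))"
  proof (rule rec_computable_mult_code[OF assms prefix])
    fix xs :: "nat list"
    assume "length xs = 2" "entries_coded enc c0 (xs ! 1)"
    then show "prim_rec ?b ?g (cand_length (xs ! 0)) xs \<in> range enc \<and>
        table_entry c0 (xs ! 1) (kappa_index m (code_nst (xs ! 1)) (cand_state (xs ! 0) (cand_length (xs ! 0)))) \<in> range enc"
      by (cases "cand_length (xs ! 0)") (auto simp: prim_rec_prefix_weight_code entries_coded_def mult_code_def)
  qed (auto intro!: rec_computable_intros simp: kappa_index_def)
  then show ?thesis
    by (rule rec_computable_cong) (simp add: prim_rec_prefix_weight_code[simplified] weight_code_def)
qed

lemma rec_computable_candidate_bound [rec_computable_intros]: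
  "rec_computable k D f \<Longrightarrow> rec_computable k D (\<lambda>xs. candidate_bound m (f xs))"
  unfolding candidate_bound_def Let_def short_run_bound_def by (intro rec_computable_intros)

lemma rec_computable_decide_zero:
  assumes "computable_semiring enc"
  shows "rec_computable 1 (\<lambda>xs. entries_coded enc c0 (xs ! 0)) (\<lambda>xs. decide_zero enc m c0 (xs ! 0))"
  unfolding decide_zero_def
proof (intro rec_computable_if rec_computable_const)
  have "rec_computable 2 (\<lambda>ys. entries_coded enc c0 (ys ! 1))
      (\<lambda>ys. of_bool (witness_candidate enc m c0 (ys ! 1) (ys ! 0)))"
    unfolding witness_candidate_def using rec_computable_weight_code[OF assms]
    by (intro rec_computable_intros) auto
  then have "rec_computable (Suc 1) (\<lambda>ys. entries_coded enc c0 (tl ys ! 0))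
      (\<lambda>ys. of_bool (witness_candidate enc m c0 (ys ! 1) (ys ! 0)))"
    unfolding Suc_1 by (rule rec_computable_mono) (auto simp: nth_tl)
  then show "rec_computable 1 (\<lambda>xs. entries_coded enc c0 (xs ! 0))
      (\<lambda>xs. of_bool (\<exists>t < candidate_bound m (xs ! 0). witness_candidate enc m c0 (xs ! 0) t))"
    by (rule rec_computable_ex) (auto intro!: rec_computable_intros)
qed

theorem corollary5p11:
  fixes enc :: "'k::comm_semiring_1 \<Rightarrow> nat" and m :: nat
  assumes "computable_semiring enc"
    and "zero_sum_free TYPE('k)"
  shows "\<exists>p. \<forall>A :: 'k wnwa.
           eval p [code_wnwa m enc A]
             (if (\<forall>nw \<in> NW m. behaviour A nw = 0) then 1 else 0)"
proof -
  have inj: "inj enc"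
    using assms(1) by (simp add: computable_semiring_def)
  obtain p where p: "\<forall>xs. length xs = 1 \<longrightarrow> entries_coded enc (enc 0) (xs ! 0) \<longrightarrow>
      eval p xs (decide_zero enc m (enc 0) (xs ! 0))"
    using rec_computable_decide_zero[OF assms(1)] unfolding rec_computable_def by blast
  have "eval p [code_wnwa m enc A] (if \<forall>nw \<in> NW m. behaviour A nw = 0 then 1 else 0)" for A :: "'k wnwa"
    using p[rule_format, of "[code_wnwa m enc A]"] table_entry_range[of "enc 0" enc m A]
      decide_zero_code_wnwa[OF inj assms(2)] by (simp add: entries_coded_def)
  then show ?thesis
    by blast
qed

end
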